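(* (Optimality of the Schatten exponent.) Let $n,p,q\ge1$ satisfy $\frac{2}{p}+\frac{n}{q}=n$. Then for every $r>\frac{2q}{q+1}$, $$\sup_{0\ne\gamma_0\in\mathcal{G}^r}\frac{\big\|\rho_{e^{-itH}\gamma_0e^{itH}}\big\|_{L^p_tL^q_x(\mathbb{T}\times\mathbb{R}^n)}}{\|\gamma_0\|_{\mathcal{G}^r}}=+\infty,$$ where the supremum is over nonzero self-adjoint operators $\gamma_0\in\mathcal{G}^r(L^2(\mathbb{R}^n))$.
   Context: $H=-\Delta+|x|^2$ on $\mathbb{R}^n$ and $e^{-itH}$ the associated unitary group; $\mathbb{T}=[-\pi,\pi]$. $\mathcal{G}^r$ is the Schatten $r$-class on $L^2(\mathbb{R}^n)$. For a self-adjoint operator written as $\gamma_0=\sum_j n_j|u_j\rangle\langle u_j|$ with $(u_j)$ orthonormal in $L^2(\mathbb{R}^n)$ and $n_j\in\mathbb{R}$ (where $|u\rangle\langle v|$ denotes $f\mapsto\langle v,f\rangle u$), one has $\|\gamma_0\|_{\mathcal{G}^r}=(\sum_j|n_j|^r)^{1/r}$, and for $\gamma(t)=e^{-itH}\gamma_0e^{itH}=\sum_j n_j|e^{-itH}u_j\rangle\langle e^{-itH}u_j|$ the density is $\rho_{\gamma(t)}(x)=\sum_j n_j|e^{-itH}u_j(x)|^2$. *)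

theory Defs
  imports "HOL-Analysis.Analysis"
begin

text \<open>Real power of an extended nonnegative real, for positive exponents (infinity stays infinity).\<close>
definition enn_powr :: "ennreal \<Rightarrow> real \<Rightarrow> ennreal" where
  "enn_powr a s = (if a = \<infinity> then \<infinity> else ennreal (enn2real a powr s))"

fun hermite_poly :: "nat \<Rightarrow> real \<Rightarrow> real" where
  "hermite_poly 0 x = 1"
| "hermite_poly (Suc 0) x = 2 * x"
| "hermite_poly (Suc (Suc k)) x =
     2 * x * hermite_poly (Suc k) x - 2 * real (Suc k) * hermite_poly k x"

text \<open>L2-normalised one-dimensional Hermite functions.\<close>
definition hermite_fun :: "nat \<Rightarrow> real \<Rightarrow> real" where
  "hermite_fun k x = hermite_poly k x * exp (- (x^2) / 2) / sqrt (2^k * fact k * sqrt pi)"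

text \<open>Hermite functions on R^n (tensor products), eigenfunctions of H = -Delta + |x|^2.\<close>
definition hermite_nd :: "('n::finite \<Rightarrow> nat) \<Rightarrow> real^'n \<Rightarrow> complex" where
  "hermite_nd \<alpha> x = complex_of_real (\<Prod>i\<in>UNIV. hermite_fun (\<alpha> i) (x $ i))"

definition hermite_eig :: "('n::finite \<Rightarrow> nat) \<Rightarrow> real" where
  "hermite_eig \<alpha> = 2 * real (\<Sum>i\<in>UNIV. \<alpha> i) + real CARD('n)"

definition sq_integrable :: "(real^'n::finite \<Rightarrow> complex) \<Rightarrow> bool" where
  "sq_integrable f \<longleftrightarrow> f \<in> borel_measurable lborel \<and> integrable lborel (\<lambda>x. (cmod (f x))^2)"

definition L2_inner :: "(real^'n::finite \<Rightarrow> complex) \<Rightarrow> (real^'n \<Rightarrow> complex) \<Rightarrow> complex" where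
  "L2_inner f g = (\<integral>x. cnj (f x) * g x \<partial>lborel)"

definition L2_orthonormal :: "(nat \<Rightarrow> real^'n::finite \<Rightarrow> complex) \<Rightarrow> bool" where
  "L2_orthonormal u \<longleftrightarrow> (\<forall>j. sq_integrable (u j)) \<and>
     (\<forall>i j. L2_inner (u i) (u j) = (if i = j then 1 else 0))"

text \<open>The unitary group e^{-itH}, defined spectrally through the Hermite basis
  (a representative of the L2 class).\<close>
definition herm_prop :: "real \<Rightarrow> (real^'n::finite \<Rightarrow> complex) \<Rightarrow> (real^'n \<Rightarrow> complex)" where
  "herm_prop t f = (SOME g. sq_integrable g \<and>
     (\<forall>\<alpha>. L2_inner (hermite_nd \<alpha>) g =
            exp (- \<i> * complex_of_real (t * hermite_eig \<alpha>)) * L2_inner (hermite_nd \<alpha>) f))"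

text \<open>Density of gamma(t) = e^{-itH} gamma_0 e^{itH}, gamma_0 = sum_j c_j |u_j><u_j|.\<close>
definition density_t :: "(nat \<Rightarrow> real) \<Rightarrow> (nat \<Rightarrow> real^'n::finite \<Rightarrow> complex) \<Rightarrow> real \<Rightarrow> real^'n \<Rightarrow> real" where
  "density_t c u t x = (\<Sum>j. c j * (cmod (herm_prop t (u j) x))^2)"

text \<open>Schatten r-norm of sum_j c_j |u_j><u_j| with (u_j) orthonormal.\<close>
definition schatten_norm :: "real \<Rightarrow> (nat \<Rightarrow> real) \<Rightarrow> real" where
  "schatten_norm r c = (\<Sum>j. \<bar>c j\<bar> powr r) powr (1 / r)"

definition mixed_norm :: "real \<Rightarrow> real \<Rightarrow> (real \<Rightarrow> real^'n::finite \<Rightarrow> real) \<Rightarrow> ennreal" where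
  "mixed_norm p q F = enn_powr
     (\<integral>\<^sup>+ t. indicator {-pi..pi} t *
        enn_powr (\<integral>\<^sup>+ x. ennreal (\<bar>F t x\<bar> powr q) \<partial>lborel) (p / q) \<partial>lborel) (1 / p)"

end

theory Submission
  imports Defs "HOL-Probability.Distributions" "HOL-Computational_Algebra.Polynomial"
begin

text \<open>
  Take for \<open>\<gamma>\<^sub>0\<close> the projection onto the Hermite functions \<open>h\<^sub>\<alpha>\<close> with all \<open>\<alpha>\<^sub>i \<le> m\<close>, whose Schatten
  norm is \<open>(m+1)^(n/r)\<close>. Test the density \<open>\<rho>\<^sub>t\<close> against the Gaussian weight
  \<open>w = exp (- |x|^2 / (4 n (m+1)))\<close>: since \<open>exp (- a s^2) \<ge> 1 - a s^2\<close> and \<open>h\<^sub>k^2\<close> has second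
  moment \<open>k + 1/2\<close>, every \<open>|e^(-itH) h\<^sub>\<alpha>|^2\<close> keeps mass at least \<open>3/4\<close> against \<open>w\<close>, so
  \<open>\<integral> \<rho>\<^sub>t w \<ge> 3/4 (m+1)^n\<close> for every \<open>t\<close>. As \<open>\<parallel>w\<parallel>\<^sub>q\<^sub>'\<close> only grows like \<open>(m+1)^(n/(2q'))\<close>, duality gives
  \<open>\<parallel>\<rho>\<^sub>t\<parallel>\<^sub>q \<ge> c (m+1)^(n(q+1)/(2q))\<close> uniformly in \<open>t\<close>, which beats \<open>(m+1)^(n/r)\<close> exactly when
  \<open>r > 2q/(q+1)\<close>.
\<close>

section \<open>Integrals of coordinatewise products on \<open>real^'n\<close>\<close>

lemma Basis_vec_eq_range_axis: "(Basis :: (real^'n::finite) set) = range (\<lambda>i. axis i 1)"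
  by (auto simp: Basis_vec_def)

lemma inj_axis_1: "inj (\<lambda>i::'n::finite. axis i (1::real))"
  by (auto intro!: injI simp: axis_eq_axis)

lemma prod_Basis_vec:
  fixes f :: "'n::finite \<Rightarrow> real \<Rightarrow> 'c::comm_monoid_mult"
  shows "(\<Prod>b\<in>(Basis::(real^'n) set). f (SOME i. axis i 1 = b) (x \<bullet> b)) = (\<Prod>i\<in>UNIV. f i (x $ i))"
proof -
  have "(\<Prod>b\<in>(Basis::(real^'n) set). f (SOME i. axis i 1 = b) (x \<bullet> b))
     = (\<Prod>i\<in>UNIV. f (SOME j. axis j 1 = (axis i 1::real^'n)) (x \<bullet> axis i 1))"
    unfolding Basis_vec_eq_range_axis by (subst prod.reindex[OF inj_axis_1]) (simp add: o_def)
  also have "\<dots> = (\<Prod>i\<in>UNIV. f i (x $ i))"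
    by (intro prod.cong refl) (simp add: axis_eq_axis cart_eq_inner_axis)
  finally show ?thesis .
qed

lemma has_bochner_integral_prod_vec_nth:
  fixes f :: "'n::finite \<Rightarrow> real \<Rightarrow> real"
  assumes int: "\<And>i. integrable lborel (f i)"
  shows "has_bochner_integral lborel (\<lambda>x::real^'n. \<Prod>i\<in>UNIV. f i (x $ i)) (\<Prod>i\<in>UNIV. \<integral>y. f i y \<partial>lborel)"
proof -
  interpret P: product_sigma_finite "\<lambda>_::real^'n. lborel :: real measure"
    by standard
  define F where "F b = f (SOME i. axis i 1 = b)" for b :: "real^'n"
  have [measurable]: "f i \<in> borel_measurable borel" for i
    using int[of i] by (simp add: borel_measurable_integrable)
  have [measurable]: "F b \<in> borel_measurable borel" for b
    unfolding F_def by simp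
  have intF: "integrable lborel (F b)" for b
    unfolding F_def by (rule int)
  have eq: "(\<lambda>x::real^'n. \<Prod>i\<in>UNIV. f i (x $ i)) = (\<lambda>x. \<Prod>b\<in>Basis. F b (x \<bullet> b))"
    unfolding F_def by (simp add: prod_Basis_vec)
  have meas: "(\<lambda>x::real^'n. \<Prod>b\<in>Basis. F b (x \<bullet> b)) \<in> borel_measurable borel"
    by measurable
  have coords: "(\<lambda>y. \<Sum>c\<in>Basis. y c *\<^sub>R c) \<in> measurable (\<Pi>\<^sub>M b\<in>(Basis::(real^'n) set). lborel) borel"
    by measurable
  have comp: "(\<Prod>b\<in>Basis. F b ((\<Sum>c\<in>Basis. y c *\<^sub>R c) \<bullet> b)) = (\<Prod>b\<in>Basis. F b (y b))"
    for y :: "real^'n \<Rightarrow> real"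
    by (intro prod.cong refl) (simp add: inner_sum_left_Basis)
  have "integrable (\<Pi>\<^sub>M b\<in>(Basis::(real^'n) set). lborel) (\<lambda>y. \<Prod>b\<in>Basis. F b (y b))"
    by (rule P.product_integrable_prod) (auto intro: intF)
  then have "integrable lborel (\<lambda>x::real^'n. \<Prod>b\<in>Basis. F b (x \<bullet> b))"
    by (subst lborel_eq, subst integrable_distr_eq[OF coords meas]) (simp add: comp)
  moreover have "(\<integral>x. (\<Prod>b\<in>Basis. F b (x \<bullet> b)) \<partial>(lborel::(real^'n) measure))
      = (\<integral>y. (\<Prod>b\<in>Basis. F b (y b)) \<partial>(\<Pi>\<^sub>M b\<in>(Basis::(real^'n) set). lborel))"
    by (subst lborel_eq, subst integral_distr[OF coords meas]) (simp add: comp)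
  moreover have "\<dots> = (\<Prod>b\<in>Basis. \<integral>y. F b y \<partial>lborel)"
    by (rule P.product_integral_prod) (auto intro: intF)
  moreover have "\<dots> = (\<Prod>i\<in>UNIV. \<integral>y. f i y \<partial>lborel)"
    using prod_Basis_vec[of "\<lambda>i _. \<integral>y. f i y \<partial>lborel" 0] unfolding F_def by simp
  ultimately show ?thesis
    unfolding eq by (simp add: has_bochner_integral_iff)
qed

section \<open>Hermite polynomials and the Gaussian functional\<close>

fun hermite_polynomial :: "nat \<Rightarrow> real poly" where
  "hermite_polynomial 0 = 1"
| "hermite_polynomial (Suc 0) = [:0, 2:]"
| "hermite_polynomial (Suc (Suc k)) =
     [:0, 2:] * hermite_polynomial (Suc k) - smult (2 * real (Suc k)) (hermite_polynomial k)"

lemma poly_hermite_polynomial: "poly (hermite_polynomial k) x = hermite_poly k x"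
  by (induction k rule: hermite_polynomial.induct) (auto simp: algebra_simps)

lemma hermite_polynomial_Suc:
  "hermite_polynomial (Suc k) = [:0, 2:] * hermite_polynomial k - smult (2 * real k) (hermite_polynomial (k - 1))"
  by (cases k) auto

lemma pderiv_hermite_polynomial:
  "pderiv (hermite_polynomial k) = smult (2 * real k) (hermite_polynomial (k - 1))"
proof (induction k rule: hermite_polynomial.induct)
  case (3 k)
  let ?H = hermite_polynomial
  have "pderiv (?H (Suc (Suc k))) = smult 2 (?H (Suc k)) + [:0, 2:] * smult (2 * real (Suc k)) (?H k)
      - smult (2 * real (Suc k)) (smult (2 * real k) (?H (k - 1)))"
    using 3 by (simp add: pderiv_mult pderiv_diff pderiv_smult pderiv_pCons)
  also have "\<dots> = smult 2 (?H (Suc k))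
      + smult (2 * real (Suc k)) ([:0, 2:] * ?H k - smult (2 * real k) (?H (k - 1)))"
    by (simp add: algebra_simps smult_diff_right)
  also have "\<dots> = smult (2 * real (Suc (Suc k))) (?H (Suc k))"
    by (simp only: hermite_polynomial_Suc[of k, symmetric]) (simp add: algebra_simps smult_add_left[symmetric])
  finally show ?case by simp
qed (simp_all add: pderiv_pCons)

lemma hermite_polynomial_Suc_pderiv:
  "hermite_polynomial (Suc k) = [:0, 2:] * hermite_polynomial k - pderiv (hermite_polynomial k)"
  by (simp add: hermite_polynomial_Suc pderiv_hermite_polynomial)

lemma coeff_hermite_polynomial:
  "coeff (hermite_polynomial k) k = 2 ^ k" "i > k \<Longrightarrow> coeff (hermite_polynomial k) i = 0"
proof -
  have "coeff (hermite_polynomial k) k = 2 ^ k \<and> (\<forall>i>k. coeff (hermite_polynomial k) i = 0)"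
  proof (induction k rule: hermite_polynomial.induct)
    case (3 k)
    have "[:0, 2:] * p = pCons 0 (smult 2 p)" for p :: "real poly"
      by (simp add: mult_pCons_left)
    with 3 show ?case by (auto simp: coeff_pCons split: nat.splits)
  qed (auto simp: coeff_pCons split: nat.splits)
  then show "coeff (hermite_polynomial k) k = 2 ^ k" "i > k \<Longrightarrow> coeff (hermite_polynomial k) i = 0"
    by auto
qed

lemma hermite_polynomial_span:
  assumes "degree P \<le> N"
  shows "\<exists>d. P = (\<Sum>j\<le>N. smult (d j) (hermite_polynomial j))"
  using assms
proof (induction N arbitrary: P)
  case 0
  then have "P = [:coeff P 0:]"
    by (metis degree_0_id le_zero_eq)
  then show ?case
    by (intro exI[of _ "\<lambda>_. coeff P 0"]) simp
next
  case (Suc N)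
  define c where "c = coeff P (Suc N) / 2 ^ Suc N"
  define Q where "Q = P - smult c (hermite_polynomial (Suc N))"
  have "degree Q \<le> N"
  proof (rule degree_le, intro allI impI)
    fix i assume "N < i"
    then consider "i = Suc N" | "Suc N < i" by linarith
    then show "coeff Q i = 0"
      by cases (use Suc.prems in \<open>simp_all add: Q_def c_def coeff_hermite_polynomial coeff_eq_0\<close>)
  qed
  then obtain d where d: "Q = (\<Sum>j\<le>N. smult (d j) (hermite_polynomial j))"
    using Suc.IH by blast
  have "P = Q + smult c (hermite_polynomial (Suc N))"
    by (simp add: Q_def)
  also have "\<dots> = (\<Sum>j\<le>Suc N. smult ((d(Suc N := c)) j) (hermite_polynomial j))"
    unfolding d by (simp add: sum.atMost_Suc)
  finally show ?case by blast
qed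

definition gauss_moment :: "nat \<Rightarrow> real" where
  "gauss_moment i = (if even i then sqrt pi * fact i / (2 ^ i * fact (i div 2)) else 0)"

lemma has_bochner_integral_gauss_moment:
  "has_bochner_integral lborel (\<lambda>x::real. x ^ i * exp (- x\<^sup>2)) (gauss_moment i)"
proof (cases "even i")
  case True
  then obtain k where k: "i = 2 * k" by blast
  have "has_bochner_integral lborel (\<lambda>x::real. exp (-x\<^sup>2) * x ^ (2 * k))
      (2 *\<^sub>R ((sqrt pi / 2) * (fact (2 * k) / (2 ^ (2 * k) * fact k))))"
    by (rule has_bochner_integral_even_function[OF gaussian_moment_even_pos]) simp
  then show ?thesis using k by (simp add: gauss_moment_def mult.commute)
next
  case False
  then obtain k where k: "i = 2 * k + 1" using oddE by blast
  have "has_bochner_integral lborel (\<lambda>x::real. exp (-x\<^sup>2) * x ^ (2 * k + 1)) 0"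
    by (rule has_bochner_integral_odd_function[OF gaussian_moment_odd_pos]) simp
  then show ?thesis using k by (simp add: gauss_moment_def mult.commute)
qed

lemma gauss_moment_recurrence: "real i * gauss_moment (i - 1) = 2 * gauss_moment (i + 1)"
proof (cases "even i")
  case True
  then show ?thesis by (cases i) (auto simp: gauss_moment_def)
next
  case False
  then obtain k where k: "i = 2 * k + 1" using oddE by blast
  have fact_ratio: "(fact (2 * k + 2) :: real) / (2 ^ (2 * k + 2) * fact (k + 1))
      = (fact (2 * k) / (2 ^ (2 * k) * fact k)) * real (2 * k + 1) / 2"
  proof -
    have f1: "(fact (2 * k + 2) :: real) = 2 * real (k + 1) * real (2 * k + 1) * fact (2 * k)"
      by (simp add: fact_Suc algebra_simps)
    have f2: "(fact (k + 1) :: real) = real (k + 1) * fact k"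
      by simp
    have f3: "(2::real) ^ (2 * k + 2) = 4 * 2 ^ (2 * k)"
      by simp
    have cancel: "(2 * K * B * F) / (4 * D * (K * G)) = F / (D * G) * B / (2::real)"
      if "K > 0" "D > 0" "G > 0" for K B F D G :: real
      using that by (simp add: field_simps)
    show ?thesis
      unfolding f1 f2 f3 by (rule cancel) auto
  qed
  have "gauss_moment (i - 1) = sqrt pi * (fact (2 * k) / (2 ^ (2 * k) * fact k))"
    using k by (simp add: gauss_moment_def)
  moreover have "gauss_moment (i + 1) = sqrt pi * (fact (2 * k + 2) / (2 ^ (2 * k + 2) * fact (k + 1)))"
    using k by (simp add: gauss_moment_def)
  ultimately show ?thesis
    using k by (simp only: fact_ratio) simp
qed

definition gauss_int :: "real poly \<Rightarrow> real" where
  "gauss_int P = (\<integral>x. poly P x * exp (- x\<^sup>2) \<partial>lborel)"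

lemma has_bochner_integral_gauss_int:
  "has_bochner_integral lborel (\<lambda>x. poly P x * exp (- x\<^sup>2)) (\<Sum>i\<le>degree P. coeff P i * gauss_moment i)"
proof -
  have "has_bochner_integral lborel (\<lambda>x. \<Sum>i\<le>degree P. coeff P i * (x ^ i * exp (- x\<^sup>2)))
      (\<Sum>i\<le>degree P. coeff P i * gauss_moment i)"
    by (intro has_bochner_integral_sum has_bochner_integral_mult_right has_bochner_integral_gauss_moment)
  then show ?thesis
    by (simp add: poly_altdef sum_distrib_right mult.assoc)
qed

lemma integrable_poly_mult_gauss: "integrable lborel (\<lambda>x. poly (P::real poly) x * exp (- x\<^sup>2))"
  using has_bochner_integral_gauss_int by (rule integrable.intros)

lemma gauss_int_eq: "gauss_int P = (\<Sum>i\<le>degree P. coeff P i * gauss_moment i)"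
  unfolding gauss_int_def using has_bochner_integral_gauss_int by (rule has_bochner_integral_integral_eq)

lemma gauss_int_add: "gauss_int (P + Q) = gauss_int P + gauss_int Q"
  unfolding gauss_int_def by (simp add: distrib_right integrable_poly_mult_gauss)

lemma gauss_int_diff: "gauss_int (P - Q) = gauss_int P - gauss_int Q"
  unfolding gauss_int_def by (simp add: left_diff_distrib integrable_poly_mult_gauss)

lemma gauss_int_smult: "gauss_int (smult c P) = c * gauss_int P"
  unfolding gauss_int_def by (simp add: mult.assoc)

lemma gauss_int_sum: "gauss_int (\<Sum>i\<in>A. f i) = (\<Sum>i\<in>A. gauss_int (f i))"
  by (induction A rule: infinite_finite_induct) (simp_all add: gauss_int_add, simp_all add: gauss_int_def)

lemma gauss_int_monom: "gauss_int (monom a i) = a * gauss_moment i"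
proof -
  have "gauss_int (monom 1 i) = (\<Sum>j\<le>i. (if i = j then 1 else 0) * gauss_moment j)"
    by (simp add: gauss_int_eq degree_monom_eq coeff_monom)
  also have "\<dots> = (\<Sum>j\<le>i. if i = j then gauss_moment j else 0)"
    by (rule sum.cong) auto
  also have "\<dots> = gauss_moment i"
    by simp
  finally show ?thesis
    using gauss_int_smult[of a "monom 1 i"] by (simp add: smult_monom)
qed

lemma pderiv_sum: "pderiv (\<Sum>i\<in>A. f i) = (\<Sum>i\<in>A. pderiv (f i))"
  by (induction A rule: infinite_finite_induct) (auto simp: pderiv_add)

text \<open>Integration by parts against \<open>exp (- x\<^sup>2)\<close>, checked on monomials via the moment recurrence.\<close>
lemma gauss_int_pderiv: "gauss_int (pderiv P) = gauss_int ([:0, 2:] * P)"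
proof -
  have monom: "gauss_int (pderiv (monom a i)) = gauss_int ([:0, 2:] * monom a i)" for a i
  proof -
    have "[:0, 2:] * monom a i = monom (2 * a) (Suc i)"
      by (simp add: monom_Suc mult_pCons_left smult_monom)
    then show ?thesis
      using gauss_moment_recurrence[of i]
      by (simp add: pderiv_monom gauss_int_monom algebra_simps)
  qed
  have "gauss_int (pderiv (\<Sum>i\<le>degree P. monom (coeff P i) i))
      = gauss_int ([:0, 2:] * (\<Sum>i\<le>degree P. monom (coeff P i) i))"
    by (simp add: pderiv_sum gauss_int_sum sum_distrib_left monom)
  then show ?thesis
    by (simp only: poly_as_sum_of_monoms)
qed

lemma gauss_int_hermite_mult:
  "gauss_int (hermite_polynomial j * hermite_polynomial k) = (if j = k then 2 ^ k * fact k * sqrt pi else 0)"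
proof (induction k arbitrary: j)
  case 0
  have "gauss_int (hermite_polynomial (Suc i)) = 0" for i
    by (simp add: hermite_polynomial_Suc_pderiv gauss_int_diff gauss_int_pderiv)
  moreover have "gauss_int 1 = sqrt pi"
    by (simp add: gauss_int_eq gauss_moment_def)
  ultimately show ?case
    by (cases j) auto
next
  case (Suc k)
  let ?H = hermite_polynomial
  have "gauss_int (?H j * ?H (Suc k)) = gauss_int ([:0, 2:] * (?H j * ?H k)) - gauss_int (?H j * pderiv (?H k))"
    by (simp add: hermite_polynomial_Suc_pderiv gauss_int_diff algebra_simps)
  also have "\<dots> = gauss_int (pderiv (?H j) * ?H k)"
    using gauss_int_pderiv[of "?H j * ?H k"] by (simp add: pderiv_mult gauss_int_add mult.commute)
  also have "\<dots> = 2 * real j * gauss_int (?H (j - 1) * ?H k)"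
    by (simp add: pderiv_hermite_polynomial gauss_int_smult)
  also have "\<dots> = (if j = Suc k then 2 ^ Suc k * fact (Suc k) * sqrt pi else 0)"
    using Suc by (cases j) auto
  finally show ?case .
qed

lemma x_mult_hermite_polynomial:
  "[:0, 1:] * hermite_polynomial k
     = smult (1/2) (hermite_polynomial (Suc k)) + smult (real k) (hermite_polynomial (k - 1))"
proof -
  have "smult 2 ([:0, 1:] * hermite_polynomial k)
      = hermite_polynomial (Suc k) + smult (2 * real k) (hermite_polynomial (k - 1))"
    by (simp add: hermite_polynomial_Suc mult_pCons_left)
  then have "smult (1/2) (smult 2 ([:0, 1:] * hermite_polynomial k))
      = smult (1/2) (hermite_polynomial (Suc k) + smult (2 * real k) (hermite_polynomial (k - 1)))"
    by simp
  then show ?thesis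
    by (simp add: smult_add_right)
qed

lemma gauss_int_x_hermite_squared:
  "gauss_int (([:0, 1:] * hermite_polynomial k) * ([:0, 1:] * hermite_polynomial k))
     = (real k + 1/2) * (2 ^ k * fact k * sqrt pi)"
proof -
  let ?H = hermite_polynomial
  have sq: "(smult a A + smult b B) * (smult a A + smult b B)
      = smult (a*a) (A*A) + smult (a*b) (A*B) + smult (a*b) (A*B) + smult (b*b) (B*B)"
    for a b :: real and A B :: "real poly"
    by (simp add: algebra_simps)
  have double: "gauss_int (2 * P) = 2 * gauss_int P" for P
    by (simp only: mult_2 gauss_int_add)
  have "gauss_int (([:0, 1:] * ?H k) * ([:0, 1:] * ?H k))
      = 1/4 * gauss_int (?H (Suc k) * ?H (Suc k)) + real k * gauss_int (?H (Suc k) * ?H (k - 1))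
        + real k * real k * gauss_int (?H (k - 1) * ?H (k - 1))"
    unfolding x_mult_hermite_polynomial sq by (simp add: gauss_int_add gauss_int_smult double)
  also have "\<dots> = 1/4 * (2 ^ Suc k * fact (Suc k) * sqrt pi)
      + real k * real k * (2 ^ (k - 1) * fact (k - 1) * sqrt pi)"
    by (simp add: gauss_int_hermite_mult)
  also have "\<dots> = (real k + 1/2) * (2 ^ k * fact k * sqrt pi)"
    by (cases k) (simp_all add: algebra_simps)
  finally show ?thesis .
qed

section \<open>Hermite functions\<close>

definition hermite_norm :: "nat \<Rightarrow> real" where
  "hermite_norm k = sqrt (2 ^ k * fact k * sqrt pi)"

lemma hermite_norm_pos: "hermite_norm k > 0"
  by (simp add: hermite_norm_def)

lemma hermite_norm_nonzero [simp]: "hermite_norm k \<noteq> 0"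
  using hermite_norm_pos[of k] by simp

lemma hermite_norm_mult_self: "hermite_norm k * hermite_norm k = 2 ^ k * fact k * sqrt pi"
  unfolding hermite_norm_def by (simp add: real_sqrt_mult_self)

lemma hermite_fun_eq:
  "hermite_fun k x = poly (hermite_polynomial k) x * exp (- x\<^sup>2 / 2) / hermite_norm k"
  by (simp add: hermite_fun_def hermite_norm_def poly_hermite_polynomial)

lemma borel_measurable_hermite_fun [measurable]: "hermite_fun k \<in> borel_measurable borel"
  unfolding hermite_fun_eq[abs_def]
  by (intro borel_measurable_continuous_onI continuous_intros) auto

lemma integrable_poly_mult_exp_neg_square:
  fixes c :: real
  assumes c: "c > 0"
  shows "integrable lborel (\<lambda>x. poly P x * exp (- c * x\<^sup>2))"
proof -
  define s where "s = sqrt c"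
  have s: "s > 0" "s * s = c"
    using c by (auto simp: s_def)
  have "(\<lambda>x. poly (pcompose P [:0, 1/s:]) x * exp (- x\<^sup>2))
      = (\<lambda>x. (\<lambda>y. poly P y * exp (- c * y\<^sup>2)) (0 + (1/s) * x))"
    using s by (auto simp: poly_pcompose power2_eq_square field_simps)
  then have "integrable lborel (\<lambda>x. (\<lambda>y. poly P y * exp (- c * y\<^sup>2)) (0 + (1/s) * x))"
    using integrable_poly_mult_gauss[of "pcompose P [:0, 1/s:]"] by simp
  then show ?thesis
    using s by (subst (asm) lborel_integrable_real_affine_iff) auto
qed

lemma integral_exp_neg_mult_square:
  fixes c :: real
  assumes c: "c > 0"
  shows "(\<integral>x. exp (- c * x\<^sup>2) \<partial>lborel) = sqrt pi / sqrt c"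
proof -
  define s where "s = sqrt c"
  have s: "s > 0" "s * s = c"
    using c by (auto simp: s_def)
  have "(\<integral>x. exp (- c * x\<^sup>2) \<partial>lborel) = \<bar>1/s\<bar> *\<^sub>R (\<integral>x. exp (- c * (0 + (1/s) * x)\<^sup>2) \<partial>lborel)"
    by (rule lborel_integral_real_affine) (use s in auto)
  also have "(\<lambda>x. exp (- c * (0 + (1/s) * x)\<^sup>2)) = (\<lambda>x. poly 1 x * exp (- x\<^sup>2))"
    using s by (auto simp: power2_eq_square field_simps)
  also have "(\<integral>x. poly 1 x * exp (- x\<^sup>2) \<partial>lborel) = sqrt pi"
    using gauss_int_eq[of 1] by (simp add: gauss_int_def gauss_moment_def)
  finally show ?thesis
    using s by (simp add: s_def)
qed

lemma hermite_fun_mult_exp_neg_square: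
  "hermite_fun j x * hermite_fun k x * exp (- c * x\<^sup>2)
     = poly (hermite_polynomial j * hermite_polynomial k) x * exp (- (1 + c) * x\<^sup>2)
       / (hermite_norm j * hermite_norm k)"
proof -
  have "exp (- x\<^sup>2 / 2) * exp (- x\<^sup>2 / 2) * exp (- c * x\<^sup>2) = exp (- (1 + c) * x\<^sup>2)"
    by (simp add: exp_add[symmetric] algebra_simps)
  then show ?thesis
    unfolding hermite_fun_eq by (simp add: field_simps)
qed

lemma integrable_hermite_fun_mult_exp_neg_square:
  assumes "c > -1"
  shows "integrable lborel (\<lambda>x. hermite_fun j x * hermite_fun k x * exp (- c * x\<^sup>2))"
  unfolding hermite_fun_mult_exp_neg_square
  using assms by (intro integrable_divide integrable_poly_mult_exp_neg_square) simp

lemma has_bochner_integral_hermite_fun_mult: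
  "has_bochner_integral lborel (\<lambda>x. hermite_fun j x * hermite_fun k x) (if j = k then 1 else 0)"
proof -
  have eq: "hermite_fun j x * hermite_fun k x
      = poly (hermite_polynomial j * hermite_polynomial k) x * exp (- x\<^sup>2) / (hermite_norm j * hermite_norm k)" for x
    using hermite_fun_mult_exp_neg_square[of j x k 0] by simp
  have "has_bochner_integral lborel
      (\<lambda>x. poly (hermite_polynomial j * hermite_polynomial k) x * exp (- x\<^sup>2) / (hermite_norm j * hermite_norm k))
      (gauss_int (hermite_polynomial j * hermite_polynomial k) / (hermite_norm j * hermite_norm k))"
    unfolding gauss_int_def
    by (intro has_bochner_integral_divide_zero has_bochner_integral_integrable integrable_poly_mult_gauss)
  moreover have "gauss_int (hermite_polynomial j * hermite_polynomial k) / (hermite_norm j * hermite_norm k)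
      = (if j = k then 1 else 0)"
    using hermite_norm_mult_self[of k] by (simp add: gauss_int_hermite_mult)
  ultimately show ?thesis
    unfolding eq by simp
qed

lemma has_bochner_integral_square_mult_hermite_fun_squared:
  "has_bochner_integral lborel (\<lambda>x. x\<^sup>2 * (hermite_fun k x)\<^sup>2) (real k + 1/2)"
proof -
  let ?P = "([:0, 1:] * hermite_polynomial k) * ([:0, 1:] * hermite_polynomial k)"
  have eq: "x\<^sup>2 * (hermite_fun k x)\<^sup>2 = poly ?P x * exp (- x\<^sup>2) / (hermite_norm k * hermite_norm k)" for x
    using hermite_fun_mult_exp_neg_square[of k x k 0] by (simp add: power2_eq_square algebra_simps)
  have "has_bochner_integral lborel (\<lambda>x. poly ?P x * exp (- x\<^sup>2) / (hermite_norm k * hermite_norm k))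
      (gauss_int ?P / (hermite_norm k * hermite_norm k))"
    unfolding gauss_int_def
    by (intro has_bochner_integral_divide_zero has_bochner_integral_integrable integrable_poly_mult_gauss)
  moreover have "gauss_int ?P / (hermite_norm k * hermite_norm k) = real k + 1/2"
    unfolding gauss_int_x_hermite_squared hermite_norm_mult_self[symmetric] by simp
  ultimately show ?thesis
    unfolding eq by simp
qed

lemma hermite_fun_mult_poly_span:
  "\<exists>d. \<forall>x. hermite_fun k x * poly T x = (\<Sum>j\<le>degree (hermite_polynomial k * T). d j * hermite_fun j x)"
proof -
  let ?N = "degree (hermite_polynomial k * T)"
  obtain d where d: "hermite_polynomial k * T = (\<Sum>j\<le>?N. smult (d j) (hermite_polynomial j))"
    using hermite_polynomial_span[OF order_refl] by blast
  have "hermite_fun k x * poly T x = (\<Sum>j\<le>?N. (d j * hermite_norm j / hermite_norm k) * hermite_fun j x)" for x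
  proof -
    have "hermite_fun k x * poly T x = poly (hermite_polynomial k * T) x * exp (- x\<^sup>2 / 2) / hermite_norm k"
      by (simp add: hermite_fun_eq)
    also have "\<dots> = (\<Sum>j\<le>?N. d j * poly (hermite_polynomial j) x * exp (- x\<^sup>2 / 2) / hermite_norm k)"
      by (subst d) (simp add: poly_sum sum_distrib_right sum_divide_distrib)
    also have "\<dots> = (\<Sum>j\<le>?N. (d j * hermite_norm j / hermite_norm k) * hermite_fun j x)"
      by (intro sum.cong refl) (simp add: hermite_fun_eq)
    finally show ?thesis .
  qed
  then show ?thesis
    by (intro exI[of _ "\<lambda>j. d j * hermite_norm j / hermite_norm k"]) simp
qed

lemma integral_hermite_fun_squared_exp_neg_square_ge:
  assumes a: "a \<ge> 0"
  shows "(\<integral>s. hermite_fun k s * hermite_fun k s * exp (- a * s\<^sup>2) \<partial>lborel) \<ge> 1 - a * (real k + 1/2)"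
proof -
  let ?h = "hermite_fun k"
  have i1: "integrable lborel (\<lambda>s. ?h s * ?h s)"
    using has_bochner_integral_hermite_fun_mult has_bochner_integral_iff by blast
  have i2: "integrable lborel (\<lambda>s. s\<^sup>2 * (?h s)\<^sup>2)"
    using has_bochner_integral_square_mult_hermite_fun_squared has_bochner_integral_iff by blast
  have "1 - a * (real k + 1/2) = (\<integral>s. ?h s * ?h s - a * (s\<^sup>2 * (?h s)\<^sup>2) \<partial>lborel)"
    using has_bochner_integral_hermite_fun_mult[of k k] has_bochner_integral_square_mult_hermite_fun_squared[of k] i1 i2
    by (simp add: has_bochner_integral_integral_eq)
  also have "\<dots> \<le> (\<integral>s. ?h s * ?h s * exp (- a * s\<^sup>2) \<partial>lborel)"
  proof (rule integral_mono)
    show "integrable lborel (\<lambda>s. ?h s * ?h s - a * (s\<^sup>2 * (?h s)\<^sup>2))"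
      using i1 i2 by simp
    show "integrable lborel (\<lambda>s. ?h s * ?h s * exp (- a * s\<^sup>2))"
      using integrable_hermite_fun_mult_exp_neg_square[of a k k] a by simp
    fix s :: real
    have "1 - a * s\<^sup>2 \<le> exp (- a * s\<^sup>2)"
      using exp_ge_add_one_self[of "- a * s\<^sup>2"] by simp
    then have "(?h s * ?h s) * (1 - a * s\<^sup>2) \<le> (?h s * ?h s) * exp (- a * s\<^sup>2)"
      by (intro mult_left_mono) auto
    then show "?h s * ?h s - a * (s\<^sup>2 * (?h s)\<^sup>2) \<le> ?h s * ?h s * exp (- a * s\<^sup>2)"
      by (simp add: algebra_simps power2_eq_square)
  qed
  finally show ?thesis .
qed

section \<open>Hermite functions on \<open>real^'n\<close> and Gaussian weights\<close>

lemma borel_measurable_vec_nth [measurable]: "(\<lambda>x::real^'n::finite. x $ i) \<in> borel_measurable borel"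
  by (rule borel_measurable_continuous_onI[OF linear_continuous_on[OF bounded_linear_vec_nth]])

definition hermite_prod :: "('n::finite \<Rightarrow> nat) \<Rightarrow> real^'n \<Rightarrow> real" where
  "hermite_prod \<alpha> x = (\<Prod>i\<in>UNIV. hermite_fun (\<alpha> i) (x $ i))"

lemma hermite_nd_eq: "hermite_nd \<alpha> = (\<lambda>x. complex_of_real (hermite_prod \<alpha> x))"
  by (simp add: hermite_nd_def hermite_prod_def fun_eq_iff)

lemma borel_measurable_hermite_prod [measurable]: "hermite_prod \<alpha> \<in> borel_measurable borel"
  unfolding hermite_prod_def by measurable

lemma borel_measurable_hermite_nd [measurable]: "hermite_nd \<alpha> \<in> borel_measurable borel"
  unfolding hermite_nd_eq by measurable

definition gauss_weight :: "real \<Rightarrow> real^'n::finite \<Rightarrow> real" where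
  "gauss_weight a x = (\<Prod>i\<in>UNIV. exp (- a * (x $ i)\<^sup>2))"

lemma borel_measurable_gauss_weight [measurable]: "gauss_weight a \<in> borel_measurable borel"
  unfolding gauss_weight_def by measurable

lemma gauss_weight_pos: "gauss_weight a x > 0"
  unfolding gauss_weight_def by (simp add: prod_pos)

lemma gauss_weight_le_1: "a \<ge> 0 \<Longrightarrow> gauss_weight a x \<le> 1"
  unfolding gauss_weight_def by (intro prod_le_1) auto

lemma gauss_weight_0 [simp]: "gauss_weight 0 x = 1"
  by (simp add: gauss_weight_def)

lemma gauss_weight_mult_self: "gauss_weight c x * gauss_weight c x = gauss_weight (2 * c) x"
  unfolding gauss_weight_def by (simp add: prod.distrib[symmetric] exp_add[symmetric] mult.assoc)

lemma gauss_weight_powr: "gauss_weight a x powr s = gauss_weight (a * s) x"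
proof -
  have exp_sum: "gauss_weight a x = exp (\<Sum>i\<in>UNIV. - a * (x $ i)\<^sup>2)" for a
    unfolding gauss_weight_def by (simp add: exp_sum)
  show ?thesis
    unfolding exp_sum powr_def by (simp add: sum_distrib_left mult_ac)
qed

lemma has_bochner_integral_gauss_weight:
  assumes "c > 0"
  shows "has_bochner_integral lborel (gauss_weight c :: real^'n::finite \<Rightarrow> real) ((sqrt pi / sqrt c) ^ CARD('n))"
proof -
  have eq: "gauss_weight c = (\<lambda>x::real^'n. \<Prod>i\<in>UNIV. (\<lambda>s. exp (- c * s\<^sup>2)) (x $ i))"
    by (simp add: gauss_weight_def fun_eq_iff)
  have "integrable lborel (\<lambda>s. exp (- c * s\<^sup>2))"
    using integrable_poly_mult_exp_neg_square[OF assms, of 1] by simp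
  then show ?thesis
    using has_bochner_integral_prod_vec_nth[of "\<lambda>(_::'n) s. exp (- c * s\<^sup>2)"]
    unfolding eq integral_exp_neg_mult_square[OF assms] by simp
qed

lemma has_bochner_integral_gauss_weight_powr:
  assumes "a > 0" "s > 0"
  shows "has_bochner_integral lborel (\<lambda>x::real^'n::finite. gauss_weight a x powr s)
    ((pi / (a * s)) powr (real CARD('n) / 2))"
proof -
  have "has_bochner_integral lborel (gauss_weight (a * s) :: real^'n \<Rightarrow> real) ((sqrt pi / sqrt (a * s)) ^ CARD('n))"
    using assms by (intro has_bochner_integral_gauss_weight) simp
  moreover have "(sqrt pi / sqrt (a * s)) ^ CARD('n) = (pi / (a * s)) powr (real CARD('n) / 2)"
    using assms by (simp add: real_sqrt_divide[symmetric] powr_half_sqrt_powr powr_realpow real_sqrt_power)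
  ultimately show ?thesis
    by (simp add: gauss_weight_powr)
qed

lemma has_bochner_integral_hermite_prod_mult_gauss_weight:
  assumes "c > -1"
  shows "has_bochner_integral lborel (\<lambda>x::real^'n::finite. hermite_prod \<alpha> x * hermite_prod \<beta> x * gauss_weight c x)
     (\<Prod>i\<in>UNIV. \<integral>s. hermite_fun (\<alpha> i) s * hermite_fun (\<beta> i) s * exp (- c * s\<^sup>2) \<partial>lborel)"
proof -
  have eq: "(\<lambda>x::real^'n. hermite_prod \<alpha> x * hermite_prod \<beta> x * gauss_weight c x)
      = (\<lambda>x. \<Prod>i\<in>UNIV. (\<lambda>s. hermite_fun (\<alpha> i) s * hermite_fun (\<beta> i) s * exp (- c * s\<^sup>2)) (x $ i))"
    unfolding hermite_prod_def gauss_weight_def by (simp add: prod.distrib fun_eq_iff)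
  show ?thesis
    unfolding eq
    by (rule has_bochner_integral_prod_vec_nth) (rule integrable_hermite_fun_mult_exp_neg_square[OF assms])
qed

lemma integrable_hermite_prod_mult_gauss_weight:
  "c > -1 \<Longrightarrow> integrable lborel (\<lambda>x::real^'n::finite. hermite_prod \<alpha> x * hermite_prod \<beta> x * gauss_weight c x)"
  by (rule integrable.intros[OF has_bochner_integral_hermite_prod_mult_gauss_weight])

lemma has_bochner_integral_hermite_prod_mult:
  "has_bochner_integral lborel (\<lambda>x::real^'n::finite. hermite_prod \<alpha> x * hermite_prod \<beta> x) (if \<alpha> = \<beta> then 1 else 0)"
proof -
  have "(\<Prod>i\<in>UNIV. \<integral>s. hermite_fun (\<alpha> i) s * hermite_fun (\<beta> i) s \<partial>lborel)
      = (\<Prod>i\<in>UNIV. if \<alpha> i = \<beta> i then 1 else 0)"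
    by (intro prod.cong refl has_bochner_integral_integral_eq has_bochner_integral_hermite_fun_mult)
  also have "\<dots> = (if \<alpha> = \<beta> then 1 else 0)"
  proof (cases "\<alpha> = \<beta>")
    case False
    then obtain i where "\<alpha> i \<noteq> \<beta> i"
      by auto
    then have "(\<Prod>i\<in>UNIV. if \<alpha> i = \<beta> i then 1 else 0) = (0::real)"
      by (intro prod_zero) auto
    then show ?thesis
      using False by simp
  qed simp
  finally show ?thesis
    using has_bochner_integral_hermite_prod_mult_gauss_weight[of 0 \<alpha> \<beta>] by simp
qed

lemma sq_integrable_hermite_nd: "sq_integrable (hermite_nd \<alpha>)"
proof -
  have "(\<lambda>x. (cmod (hermite_nd \<alpha> x))\<^sup>2) = (\<lambda>x. hermite_prod \<alpha> x * hermite_prod \<alpha> x)"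
    by (simp add: hermite_nd_eq power2_eq_square)
  then show ?thesis
    using has_bochner_integral_hermite_prod_mult[of \<alpha> \<alpha>]
    by (simp add: sq_integrable_def has_bochner_integral_iff)
qed

lemma L2_inner_hermite_nd: "L2_inner (hermite_nd \<alpha>) (hermite_nd \<beta>) = (if \<alpha> = \<beta> then 1 else 0)"
proof -
  have "L2_inner (hermite_nd \<alpha>) (hermite_nd \<beta>) = (\<integral>x. complex_of_real (hermite_prod \<alpha> x * hermite_prod \<beta> x) \<partial>lborel)"
    unfolding L2_inner_def by (simp add: hermite_nd_eq)
  also have "\<dots> = (if \<alpha> = \<beta> then 1 else 0)"
    using has_bochner_integral_hermite_prod_mult[of \<alpha> \<beta>]
    by (simp only: integral_complex_of_real has_bochner_integral_integral_eq) simp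
  finally show ?thesis .
qed

section \<open>Functions orthogonal to all Hermite functions\<close>

lemma integrable_mult_if_square_integrable:
  fixes f g :: "'a \<Rightarrow> complex"
  assumes [measurable]: "f \<in> borel_measurable M" "g \<in> borel_measurable M"
    and "integrable M (\<lambda>x. (cmod (f x))\<^sup>2)" "integrable M (\<lambda>x. (cmod (g x))\<^sup>2)"
  shows "integrable M (\<lambda>x. f x * g x)"
proof (rule Bochner_Integration.integrable_bound[of _ "\<lambda>x. (cmod (f x))\<^sup>2 + (cmod (g x))\<^sup>2"])
  show "integrable M (\<lambda>x. (cmod (f x))\<^sup>2 + (cmod (g x))\<^sup>2)"
    using assms by simp
  show "AE x in M. norm (f x * g x) \<le> norm ((cmod (f x))\<^sup>2 + (cmod (g x))\<^sup>2)"
  proof (intro AE_I2)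
    fix x
    have "cmod (f x) * cmod (g x) \<le> (cmod (f x))\<^sup>2 + (cmod (g x))\<^sup>2"
      using sum_squares_bound[of "cmod (f x)" "cmod (g x)"]
        mult_nonneg_nonneg[OF norm_ge_zero[of "f x"] norm_ge_zero[of "g x"]]
      unfolding power2_eq_square by linarith
    then show "norm (f x * g x) \<le> norm ((cmod (f x))\<^sup>2 + (cmod (g x))\<^sup>2)"
      by (simp add: norm_mult)
  qed
qed measurable

lemma borel_measurable_cnj [measurable]:
  "f \<in> borel_measurable M \<Longrightarrow> (\<lambda>x. cnj (f x)) \<in> borel_measurable M"
  by (rule borel_measurable_continuous_on[OF continuous_on_cnj[OF continuous_on_id]])

lemma integrable_cnj_mult_if_sq_integrable:
  "sq_integrable f \<Longrightarrow> sq_integrable g \<Longrightarrow> integrable lborel (\<lambda>x. cnj (f x) * g x)"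
  unfolding sq_integrable_def by (intro integrable_mult_if_square_integrable) auto

lemma sq_integrable_diff_scaled:
  assumes f: "sq_integrable f" and g: "sq_integrable g"
  shows "sq_integrable (\<lambda>x. f x - c * g x)"
  unfolding sq_integrable_def
proof
  have [measurable]: "f \<in> borel_measurable lborel" "g \<in> borel_measurable lborel"
    using f g by (auto simp: sq_integrable_def)
  show "(\<lambda>x. f x - c * g x) \<in> borel_measurable lborel"
    by measurable
  show "integrable lborel (\<lambda>x. (cmod (f x - c * g x))\<^sup>2)"
  proof (rule Bochner_Integration.integrable_bound)
    show "integrable lborel (\<lambda>x. 2 * (cmod (f x))\<^sup>2 + 2 * (cmod c)\<^sup>2 * (cmod (g x))\<^sup>2)"
      using f g by (simp add: sq_integrable_def)
    show "AE x in lborel. norm ((cmod (f x - c * g x))\<^sup>2)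
        \<le> norm (2 * (cmod (f x))\<^sup>2 + 2 * (cmod c)\<^sup>2 * (cmod (g x))\<^sup>2)"
    proof (intro AE_I2)
      fix x
      have "cmod (f x - c * g x) \<le> cmod (f x) + cmod c * cmod (g x)"
        using norm_triangle_ineq4[of "f x" "c * g x"] by (simp add: norm_mult)
      then have "(cmod (f x - c * g x))\<^sup>2 \<le> (cmod (f x) + cmod c * cmod (g x))\<^sup>2"
        by (intro power_mono) auto
      also have "\<dots> \<le> 2 * (cmod (f x))\<^sup>2 + 2 * (cmod c)\<^sup>2 * (cmod (g x))\<^sup>2"
        using sum_squares_bound[of "cmod (f x)" "cmod c * cmod (g x)"]
        by (simp add: power2_eq_square algebra_simps)
      finally show "norm ((cmod (f x - c * g x))\<^sup>2) \<le> norm (2 * (cmod (f x))\<^sup>2 + 2 * (cmod c)\<^sup>2 * (cmod (g x))\<^sup>2)"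
        by simp
    qed
  qed measurable
qed

lemma L2_inner_diff_scaled:
  assumes "sq_integrable f" "sq_integrable g1" "sq_integrable g2"
  shows "L2_inner f (\<lambda>x. g1 x - c * g2 x) = L2_inner f g1 - c * L2_inner f g2"
proof -
  have "L2_inner f (\<lambda>x. g1 x - c * g2 x) = (\<integral>x. cnj (f x) * g1 x - c * (cnj (f x) * g2 x) \<partial>lborel)"
    unfolding L2_inner_def by (simp add: algebra_simps)
  then show ?thesis
    unfolding L2_inner_def using assms by (simp add: integrable_cnj_mult_if_sq_integrable)
qed

lemma sq_integrable_hermite_prod_mult_gauss_weight:
  assumes "b > - 1/2"
  shows "sq_integrable (\<lambda>x. complex_of_real (hermite_prod \<alpha> x * gauss_weight b x))"
proof -
  have "(cmod (complex_of_real (hermite_prod \<alpha> x * gauss_weight b x)))\<^sup>2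
      = hermite_prod \<alpha> x * hermite_prod \<alpha> x * gauss_weight (2 * b) x" for x
  proof -
    have "(cmod (complex_of_real (hermite_prod \<alpha> x * gauss_weight b x)))\<^sup>2
        = hermite_prod \<alpha> x * hermite_prod \<alpha> x * (gauss_weight b x * gauss_weight b x)"
      by (simp only: norm_of_real power2_abs) (simp add: power2_eq_square mult_ac)
    then show ?thesis
      by (simp only: gauss_weight_mult_self)
  qed
  then show ?thesis
    using integrable_hermite_prod_mult_gauss_weight[of "2 * b" \<alpha> \<alpha>] assms
    by (simp add: sq_integrable_def)
qed

definition exp_taylor_poly :: "real \<Rightarrow> nat \<Rightarrow> real poly" where
  "exp_taylor_poly a m = (\<Sum>l\<le>m. monom ((- a) ^ l / fact l) (2 * l))"

lemma poly_exp_taylor_poly: "poly (exp_taylor_poly a m) s = (\<Sum>l\<le>m. (- a * s\<^sup>2) ^ l /\<^sub>R fact l)"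
proof -
  have "(- a) ^ l / fact l * s ^ (2 * l) = (- a * s\<^sup>2) ^ l /\<^sub>R fact l" for l
  proof -
    have "(- a * s\<^sup>2) ^ l = (- a) ^ l * s ^ (2 * l)"
      by (simp only: power_mult power_mult_distrib)
    then show ?thesis
      by (simp add: divide_inverse)
  qed
  then show ?thesis
    unfolding exp_taylor_poly_def poly_sum poly_monom by (intro sum.cong refl)
qed

lemma abs_poly_exp_taylor_poly_le:
  assumes "a \<ge> 0"
  shows "\<bar>poly (exp_taylor_poly a m) s\<bar> \<le> exp (a * s\<^sup>2)"
proof -
  have "\<bar>poly (exp_taylor_poly a m) s\<bar> \<le> (\<Sum>l\<le>m. \<bar>(- a * s\<^sup>2) ^ l /\<^sub>R fact l\<bar>)"
    unfolding poly_exp_taylor_poly by (rule sum_abs)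
  also have "\<dots> = (\<Sum>l\<le>m. (a * s\<^sup>2) ^ l /\<^sub>R fact l)"
    using assms by (intro sum.cong refl) (simp add: power_abs abs_mult)
  also have "\<dots> \<le> (\<Sum>l. (a * s\<^sup>2) ^ l /\<^sub>R fact l)"
    using assms by (intro sum_le_suminf) (auto simp: summable_exp)
  also have "\<dots> = exp (a * s\<^sup>2)"
    using exp_converges[of "a * s\<^sup>2"] by (simp add: sums_iff)
  finally show ?thesis .
qed

definition gauss_weight_taylor :: "real \<Rightarrow> nat \<Rightarrow> real^'n::finite \<Rightarrow> real" where
  "gauss_weight_taylor a m x = (\<Prod>i\<in>UNIV. poly (exp_taylor_poly a m) (x $ i))"

lemma borel_measurable_poly [measurable]: "(poly P :: real \<Rightarrow> real) \<in> borel_measurable borel"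
  by (intro borel_measurable_continuous_onI continuous_intros)

lemma borel_measurable_gauss_weight_taylor [measurable]: "gauss_weight_taylor a m \<in> borel_measurable borel"
  unfolding gauss_weight_taylor_def by measurable

lemma gauss_weight_taylor_tendsto: "(\<lambda>m. gauss_weight_taylor a m x) \<longlonglongrightarrow> gauss_weight a x"
  unfolding gauss_weight_taylor_def gauss_weight_def poly_exp_taylor_poly
proof (intro tendsto_prod)
  show "(\<lambda>m. \<Sum>l\<le>m. (- a * (x $ i)\<^sup>2) ^ l /\<^sub>R fact l) \<longlonglongrightarrow> exp (- a * (x $ i)\<^sup>2)" for i
    using exp_converges[of "- a * (x $ i)\<^sup>2"] by (simp add: sums_def_le)
qed

lemma abs_gauss_weight_taylor_le: "a \<ge> 0 \<Longrightarrow> \<bar>gauss_weight_taylor a m x\<bar> \<le> gauss_weight (- a) x"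
  unfolding gauss_weight_taylor_def gauss_weight_def abs_prod
  by (intro prod_mono) (simp add: abs_poly_exp_taylor_poly_le)

lemma hermite_prod_mult_gauss_weight_taylor_span:
  "\<exists>G c. finite G \<and> (\<forall>x. hermite_prod \<alpha> x * gauss_weight_taylor a m x = (\<Sum>\<gamma>\<in>G. c \<gamma> * hermite_prod \<gamma> x))"
proof -
  let ?T = "exp_taylor_poly a m"
  define L where "L i = degree (hermite_polynomial (\<alpha> i) * ?T)" for i
  have "\<forall>i. \<exists>d. \<forall>s. hermite_fun (\<alpha> i) s * poly ?T s = (\<Sum>j\<le>L i. d j * hermite_fun j s)"
    unfolding L_def using hermite_fun_mult_poly_span by blast
  from choice[OF this] obtain d
    where d: "\<forall>i s. hermite_fun (\<alpha> i) s * poly ?T s = (\<Sum>j\<le>L i. d i j * hermite_fun j s)"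
    by blast
  define G where "G = PiE UNIV (\<lambda>i. {..L i})"
  have "hermite_prod \<alpha> x * gauss_weight_taylor a m x = (\<Sum>\<gamma>\<in>G. (\<Prod>i\<in>UNIV. d i (\<gamma> i)) * hermite_prod \<gamma> x)" for x
  proof -
    have "hermite_prod \<alpha> x * gauss_weight_taylor a m x
        = (\<Prod>i\<in>UNIV. hermite_fun (\<alpha> i) (x $ i) * poly ?T (x $ i))"
      unfolding hermite_prod_def gauss_weight_taylor_def by (simp add: prod.distrib)
    also have "\<dots> = (\<Prod>i\<in>UNIV. \<Sum>j\<in>{..L i}. d i j * hermite_fun j (x $ i))"
      using d by simp
    also have "\<dots> = (\<Sum>\<gamma>\<in>G. \<Prod>i\<in>UNIV. d i (\<gamma> i) * hermite_fun (\<gamma> i) (x $ i))"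
      unfolding G_def by (rule prod_sum_PiE) auto
    also have "\<dots> = (\<Sum>\<gamma>\<in>G. (\<Prod>i\<in>UNIV. d i (\<gamma> i)) * hermite_prod \<gamma> x)"
      unfolding hermite_prod_def by (simp add: prod.distrib)
    finally show ?thesis .
  qed
  moreover have "finite G"
    unfolding G_def by (intro finite_PiE) auto
  ultimately show ?thesis
    by (intro exI[of _ G] exI[of _ "\<lambda>\<gamma>. \<Prod>i\<in>UNIV. d i (\<gamma> i)"]) simp
qed

lemma integral_hermite_prod_mult_gauss_weight_taylor_orthogonal:
  assumes W: "sq_integrable W" and orth: "\<And>\<gamma>. L2_inner (hermite_nd \<gamma>) W = 0"
  shows "(\<integral>x. complex_of_real (hermite_prod \<alpha> x * gauss_weight_taylor a m x) * W x \<partial>lborel) = 0"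
proof -
  obtain G c where G: "finite G"
    and eq: "\<And>x. hermite_prod \<alpha> x * gauss_weight_taylor a m x = (\<Sum>\<gamma>\<in>G. c \<gamma> * hermite_prod \<gamma> x)"
    using hermite_prod_mult_gauss_weight_taylor_span by blast
  have int: "integrable lborel (\<lambda>x. complex_of_real (hermite_prod \<gamma> x) * W x)" for \<gamma>
    using integrable_cnj_mult_if_sq_integrable[OF sq_integrable_hermite_nd W, of \<gamma>]
    by (simp add: hermite_nd_eq)
  have "(\<integral>x. complex_of_real (hermite_prod \<alpha> x * gauss_weight_taylor a m x) * W x \<partial>lborel)
      = (\<integral>x. (\<Sum>\<gamma>\<in>G. complex_of_real (c \<gamma>) * (complex_of_real (hermite_prod \<gamma> x) * W x)) \<partial>lborel)"
    by (simp add: eq sum_distrib_right mult.assoc)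
  also have "\<dots> = (\<Sum>\<gamma>\<in>G. complex_of_real (c \<gamma>) * (\<integral>x. complex_of_real (hermite_prod \<gamma> x) * W x \<partial>lborel))"
    using int by (subst Bochner_Integration.integral_sum) auto
  also have "\<dots> = 0"
    using orth by (simp add: L2_inner_def hermite_nd_eq)
  finally show ?thesis .
qed

text \<open>Dominated convergence along the Taylor truncations of the Gaussian; the dominating
  function \<open>h\<^sub>\<alpha> exp(a |x|\<^sup>2) |W|\<close> is integrable precisely because \<open>a < 1/2\<close>.\<close>
lemma integral_hermite_prod_mult_gauss_weight_orthogonal:
  fixes \<alpha> :: "'n::finite \<Rightarrow> nat"
  assumes W: "sq_integrable W" and orth: "\<And>\<gamma>. L2_inner (hermite_nd \<gamma>) W = 0"
    and a: "0 \<le> a" "a < 1/2"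
  shows "(\<integral>x. complex_of_real (hermite_prod \<alpha> x * gauss_weight a x) * W x \<partial>lborel) = 0"
proof -
  have [measurable]: "W \<in> borel_measurable lborel"
    using W by (simp add: sq_integrable_def)
  let ?w = "\<lambda>x. cmod (complex_of_real (hermite_prod \<alpha> x * gauss_weight (- a) x) * W x)"
  have "(\<lambda>m. \<integral>x. complex_of_real (hermite_prod \<alpha> x * gauss_weight_taylor a m x) * W x \<partial>lborel)
      \<longlonglongrightarrow> (\<integral>x. complex_of_real (hermite_prod \<alpha> x * gauss_weight a x) * W x \<partial>lborel)"
  proof (rule integral_dominated_convergence[where w = ?w])
    show "integrable lborel ?w"
      using sq_integrable_hermite_prod_mult_gauss_weight[of "- a" \<alpha>] W a
      by (intro integrable_norm integrable_mult_if_square_integrable) (auto simp: sq_integrable_def)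
    show "AE x in lborel. (\<lambda>m. complex_of_real (hermite_prod \<alpha> x * gauss_weight_taylor a m x) * W x)
        \<longlonglongrightarrow> complex_of_real (hermite_prod \<alpha> x * gauss_weight a x) * W x"
      by (intro AE_I2 tendsto_intros gauss_weight_taylor_tendsto)
    show "AE x in lborel. norm (complex_of_real (hermite_prod \<alpha> x * gauss_weight_taylor a m x) * W x) \<le> ?w x" for m
    proof (intro AE_I2)
      fix x :: "real^'n"
      have "\<bar>gauss_weight_taylor a m x\<bar> \<le> \<bar>gauss_weight (- a) x\<bar>"
        using abs_gauss_weight_taylor_le[OF a(1), of m x] gauss_weight_pos[of "- a" x] by simp
      then show "norm (complex_of_real (hermite_prod \<alpha> x * gauss_weight_taylor a m x) * W x) \<le> ?w x"
        by (simp add: norm_mult abs_mult mult_right_mono mult_left_mono)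
    qed
  qed measurable
  then show ?thesis
    using integral_hermite_prod_mult_gauss_weight_taylor_orthogonal[OF W orth]
    by (simp add: LIMSEQ_const_iff)
qed

lemma integrable_sq_mult_gauss_weight:
  assumes g: "sq_integrable g" and a: "a \<ge> 0"
  shows "integrable lborel (\<lambda>x. (cmod (g x))\<^sup>2 * gauss_weight a x)"
proof (rule Bochner_Integration.integrable_bound)
  have [measurable]: "g \<in> borel_measurable lborel"
    using g by (simp add: sq_integrable_def)
  show "integrable lborel (\<lambda>x. (cmod (g x))\<^sup>2)"
    using g by (simp add: sq_integrable_def)
  show "AE x in lborel. norm ((cmod (g x))\<^sup>2 * gauss_weight a x) \<le> norm ((cmod (g x))\<^sup>2)"
  proof (intro AE_I2)
    fix x
    have "(cmod (g x))\<^sup>2 * gauss_weight a x \<le> (cmod (g x))\<^sup>2"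
      using gauss_weight_le_1[OF a, of x] by (intro mult_left_le) auto
    then show "norm ((cmod (g x))\<^sup>2 * gauss_weight a x) \<le> norm ((cmod (g x))\<^sup>2)"
      using gauss_weight_pos[of a x] by (simp add: abs_mult)
  qed
  show "(\<lambda>x. (cmod (g x))\<^sup>2 * gauss_weight a x) \<in> borel_measurable lborel"
    by measurable
qed

lemma cmod_add_squared_ge:
  assumes "cmod e = 1"
  shows "h * h + 2 * (h * Re (cnj e * w)) \<le> (cmod (e * complex_of_real h + w))\<^sup>2"
proof -
  have "(cmod (e * complex_of_real h + w))\<^sup>2
      = (cmod e)\<^sup>2 * (h * h) + 2 * (h * Re (cnj e * w)) + (cmod w)\<^sup>2"
    unfolding cmod_power2 by (simp add: power2_eq_square algebra_simps)
  then show ?thesis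
    using assms by simp
qed

lemma integral_hermite_prod_squared_gauss_weight_le_add_orthogonal:
  fixes \<alpha> :: "'n::finite \<Rightarrow> nat"
  assumes W: "sq_integrable W" and orth: "\<And>\<gamma>. L2_inner (hermite_nd \<gamma>) W = 0"
    and e: "cmod e = 1" and a: "0 \<le> a" "a < 1/2"
  shows "(\<integral>x. hermite_prod \<alpha> x * hermite_prod \<alpha> x * gauss_weight a x \<partial>lborel)
      \<le> (\<integral>x. (cmod (e * hermite_nd \<alpha> x + W x))\<^sup>2 * gauss_weight a x \<partial>lborel)"
proof -
  let ?h = "hermite_prod \<alpha>"
  define F where "F x = complex_of_real (?h x * gauss_weight a x) * W x" for x
  have F: "integrable lborel F"
    unfolding F_def
    using integrable_cnj_mult_if_sq_integrable[OF sq_integrable_hermite_prod_mult_gauss_weight W, of a \<alpha>] a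
    by simp
  have "(\<integral>x. Re (cnj e * F x) \<partial>lborel) = Re (cnj e * (\<integral>x. F x \<partial>lborel))"
    using F by simp
  also have "\<dots> = 0"
    using integral_hermite_prod_mult_gauss_weight_orthogonal[OF W orth a] by (simp add: F_def)
  finally have cross: "(\<integral>x. Re (cnj e * F x) \<partial>lborel) = 0" .
  have h: "integrable lborel (\<lambda>x. ?h x * ?h x * gauss_weight a x)"
    using a by (intro integrable_hermite_prod_mult_gauss_weight) simp
  have "(\<integral>x. ?h x * ?h x * gauss_weight a x \<partial>lborel)
      = (\<integral>x. ?h x * ?h x * gauss_weight a x + 2 * Re (cnj e * F x) \<partial>lborel)"
    using h F cross by simp
  also have "\<dots> \<le> (\<integral>x. (cmod (e * hermite_nd \<alpha> x + W x))\<^sup>2 * gauss_weight a x \<partial>lborel)"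
  proof (rule integral_mono)
    show "integrable lborel (\<lambda>x. ?h x * ?h x * gauss_weight a x + 2 * Re (cnj e * F x))"
      using h F by simp
    show "integrable lborel (\<lambda>x. (cmod (e * hermite_nd \<alpha> x + W x))\<^sup>2 * gauss_weight a x)"
      using a W by (intro integrable_sq_mult_gauss_weight)
        (simp_all add: sq_integrable_diff_scaled[OF W sq_integrable_hermite_nd, of "- e", simplified] add.commute)
    fix x
    have "?h x * ?h x + 2 * (?h x * Re (cnj e * W x)) \<le> (cmod (e * hermite_nd \<alpha> x + W x))\<^sup>2"
      using cmod_add_squared_ge[OF e] by (simp add: hermite_nd_eq)
    then have "gauss_weight a x * (?h x * ?h x + 2 * (?h x * Re (cnj e * W x)))
        \<le> gauss_weight a x * (cmod (e * hermite_nd \<alpha> x + W x))\<^sup>2"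
      using gauss_weight_pos[of a x] by (intro mult_left_mono) auto
    then show "?h x * ?h x * gauss_weight a x + 2 * Re (cnj e * F x)
        \<le> (cmod (e * hermite_nd \<alpha> x + W x))\<^sup>2 * gauss_weight a x"
      by (simp add: F_def algebra_simps)
  qed
  finally show ?thesis .
qed

text \<open>If \<open>g\<close> has the Hermite coefficients of \<open>e h\<^sub>\<alpha>\<close>, then \<open>g = e h\<^sub>\<alpha> + W\<close> with \<open>W\<close> orthogonal to
  every Hermite function. Nothing forces \<open>W = 0\<close>, but \<open>W\<close> is orthogonal to \<open>h\<^sub>\<alpha>\<close> times the
  Gaussian weight, so it cannot decrease the weighted mass.\<close>
lemma integral_hermite_prod_squared_gauss_weight_le:
  fixes \<alpha> :: "'n::finite \<Rightarrow> nat"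
  assumes g: "sq_integrable g"
    and coeff: "\<And>\<gamma>. L2_inner (hermite_nd \<gamma>) g = e * L2_inner (hermite_nd \<gamma>) (hermite_nd \<alpha>)"
    and e: "cmod e = 1" and a: "0 \<le> a" "a < 1/2"
  shows "(\<integral>x. hermite_prod \<alpha> x * hermite_prod \<alpha> x * gauss_weight a x \<partial>lborel)
      \<le> (\<integral>x. (cmod (g x))\<^sup>2 * gauss_weight a x \<partial>lborel)"
proof -
  define W where "W x = g x - e * hermite_nd \<alpha> x" for x
  have W: "sq_integrable W"
    unfolding W_def by (rule sq_integrable_diff_scaled[OF g sq_integrable_hermite_nd])
  have "L2_inner (hermite_nd \<gamma>) W = 0" for \<gamma>
    unfolding W_def[abs_def]
    by (simp add: L2_inner_diff_scaled[OF sq_integrable_hermite_nd g sq_integrable_hermite_nd] coeff)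
  from integral_hermite_prod_squared_gauss_weight_le_add_orthogonal[OF W this e a, where \<alpha> = \<alpha>]
  show ?thesis
    by (simp add: W_def)
qed

section \<open>The propagator on Hermite functions\<close>

lemma herm_prop_hermite_nd:
  fixes \<alpha> :: "'n::finite \<Rightarrow> nat" and t :: real
  defines "e \<equiv> exp (- \<i> * complex_of_real (t * hermite_eig \<alpha>))"
  shows "sq_integrable (herm_prop t (hermite_nd \<alpha>))"
    and "L2_inner (hermite_nd \<gamma>) (herm_prop t (hermite_nd \<alpha>)) = e * L2_inner (hermite_nd \<gamma>) (hermite_nd \<alpha>)"
proof -
  define P where "P g \<longleftrightarrow> sq_integrable g \<and>
     (\<forall>\<gamma>. L2_inner (hermite_nd \<gamma>) g
            = exp (- \<i> * complex_of_real (t * hermite_eig \<gamma>)) * L2_inner (hermite_nd \<gamma>) (hermite_nd \<alpha>))"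
    for g :: "real^'n \<Rightarrow> complex"
  have e_unit: "cmod e = 1"
    by (simp add: e_def norm_exp_eq_Re)
  have "P (\<lambda>x. e * hermite_nd \<alpha> x)"
    unfolding P_def
  proof
    show "sq_integrable (\<lambda>x. e * hermite_nd \<alpha> x)"
      using sq_integrable_hermite_nd[of \<alpha>] e_unit by (simp add: sq_integrable_def norm_mult)
    show "\<forall>\<gamma>. L2_inner (hermite_nd \<gamma>) (\<lambda>x. e * hermite_nd \<alpha> x)
        = exp (- \<i> * complex_of_real (t * hermite_eig \<gamma>)) * L2_inner (hermite_nd \<gamma>) (hermite_nd \<alpha>)"
      by (simp add: L2_inner_def mult.left_commute) (simp add: L2_inner_hermite_nd[unfolded L2_inner_def] e_def)
  qed
  then have "P (SOME g. P g)"
    by (rule someI[of P])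
  moreover have "(SOME g. P g) = herm_prop t (hermite_nd \<alpha>)"
    unfolding herm_prop_def P_def by simp
  ultimately have "P (herm_prop t (hermite_nd \<alpha>))"
    by simp
  then show "sq_integrable (herm_prop t (hermite_nd \<alpha>))"
    and "L2_inner (hermite_nd \<gamma>) (herm_prop t (hermite_nd \<alpha>)) = e * L2_inner (hermite_nd \<gamma>) (hermite_nd \<alpha>)"
    unfolding P_def by (auto simp: L2_inner_hermite_nd e_def)
qed

lemma borel_measurable_herm_prop_hermite_nd [measurable]:
  "herm_prop t (hermite_nd \<alpha>) \<in> borel_measurable borel"
  using herm_prop_hermite_nd(1)[of t \<alpha>] by (simp add: sq_integrable_def)

lemma integral_hermite_prod_squared_gauss_weight_ge:
  fixes \<alpha> :: "'n::finite \<Rightarrow> nat"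
  assumes \<alpha>: "\<And>i. \<alpha> i \<le> m" and a: "a = 1 / (4 * real CARD('n) * (real m + 1))"
  shows "(\<integral>x. hermite_prod \<alpha> x * hermite_prod \<alpha> x * gauss_weight a x \<partial>lborel) \<ge> 3/4"
proof -
  define n where "n = real CARD('n)"
  have n: "n \<ge> 1"
    unfolding n_def by simp
  have a0: "a \<ge> 0"
    using a by simp
  have "1 - 1 / (4 * n) \<le> (\<integral>s. hermite_fun (\<alpha> i) s * hermite_fun (\<alpha> i) s * exp (- a * s\<^sup>2) \<partial>lborel)" for i
  proof -
    have "1 - 1 / (4 * n) = 1 - a * (real m + 1)"
      using a unfolding n_def by simp
    also have "\<dots> \<le> 1 - a * (real (\<alpha> i) + 1/2)"
      using \<alpha>[of i] a0 by (intro diff_left_mono mult_left_mono) auto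
    also have "\<dots> \<le> (\<integral>s. hermite_fun (\<alpha> i) s * hermite_fun (\<alpha> i) s * exp (- a * s\<^sup>2) \<partial>lborel)"
      by (rule integral_hermite_fun_squared_exp_neg_square_ge[OF a0])
    finally show ?thesis .
  qed
  then have "(\<Prod>i\<in>(UNIV::'n set). 1 - 1 / (4 * n))
      \<le> (\<Prod>i\<in>UNIV. \<integral>s. hermite_fun (\<alpha> i) s * hermite_fun (\<alpha> i) s * exp (- a * s\<^sup>2) \<partial>lborel)"
    using n by (intro prod_mono) (simp add: field_simps)
  also have "\<dots> = (\<integral>x. hermite_prod \<alpha> x * hermite_prod \<alpha> x * gauss_weight a x \<partial>lborel)"
    using a0 has_bochner_integral_hermite_prod_mult_gauss_weight[of a \<alpha> \<alpha>]
    by (simp add: has_bochner_integral_integral_eq)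
  finally have "(1 - 1 / (4 * n)) ^ CARD('n) \<le> (\<integral>x. hermite_prod \<alpha> x * hermite_prod \<alpha> x * gauss_weight a x \<partial>lborel)"
    by simp
  moreover have "3/4 = 1 + real CARD('n) * (- 1 / (4 * n))"
    using n unfolding n_def by simp
  moreover have "\<dots> \<le> (1 - 1 / (4 * n)) ^ CARD('n)"
    using Bernoulli_inequality[of "- 1 / (4 * n)" "CARD('n)"] n by (simp add: field_simps)
  ultimately show ?thesis
    by linarith
qed

lemma integral_herm_prop_squared_gauss_weight_ge:
  fixes \<alpha> :: "'n::finite \<Rightarrow> nat"
  assumes \<alpha>: "\<And>i. \<alpha> i \<le> m" and a: "a = 1 / (4 * real CARD('n) * (real m + 1))"
  shows "(\<integral>x. (cmod (herm_prop t (hermite_nd \<alpha>) x))\<^sup>2 * gauss_weight a x \<partial>lborel) \<ge> 3/4"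
proof -
  have "4 \<le> 4 * real CARD('n) * (real m + 1)"
    using mult_mono[of 1 "real CARD('n)" 1 "real m + 1"] by simp
  then have "a \<le> 1/4"
    unfolding a by (intro divide_left_mono) auto
  then have a_bounds: "0 \<le> a" "a < 1/2"
    using a by auto
  have e: "cmod (exp (- \<i> * complex_of_real (t * hermite_eig \<alpha>))) = 1"
    by (simp add: norm_exp_eq_Re)
  have "3/4 \<le> (\<integral>x. hermite_prod \<alpha> x * hermite_prod \<alpha> x * gauss_weight a x \<partial>lborel)"
    by (rule integral_hermite_prod_squared_gauss_weight_ge[OF \<alpha> a])
  also have "\<dots> \<le> (\<integral>x. (cmod (herm_prop t (hermite_nd \<alpha>) x))\<^sup>2 * gauss_weight a x \<partial>lborel)"
    by (rule integral_hermite_prod_squared_gauss_weight_le[OF herm_prop_hermite_nd(1) herm_prop_hermite_nd(2) e a_bounds])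
  finally show ?thesis .
qed

section \<open>A reverse Hoelder bound\<close>

definition duality_bound :: "real \<Rightarrow> real \<Rightarrow> real \<Rightarrow> real" where
  "duality_bound q A \<Phi> = q * A / (2 * (2 * \<Phi> / (q / (q - 1) * A)) powr (q - 1))"

lemma duality_bound_pos: "q > 1 \<Longrightarrow> A > 0 \<Longrightarrow> \<Phi> > 0 \<Longrightarrow> duality_bound q A \<Phi> > 0"
  by (simp add: duality_bound_def)

lemma duality_bound_scale:
  assumes "q > 1" "A > 0" "\<Phi> > 0" "X > 0"
  shows "duality_bound q (A * X powr a) (\<Phi> * X powr b) = duality_bound q A \<Phi> * X powr (a + (a - b) * (q - 1))"
proof -
  define C where "C = 2 * \<Phi> / (q / (q - 1) * A)"
  have C: "C > 0"
    using assms by (simp add: C_def)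
  have "2 * (\<Phi> * X powr b) / (q / (q - 1) * (A * X powr a)) = C * X powr (b - a)"
    using assms by (simp add: C_def powr_diff field_simps)
  moreover have "(C * X powr (b - a)) powr (q - 1) = C powr (q - 1) * X powr ((b - a) * (q - 1))"
    using C assms by (simp add: powr_mult powr_powr)
  moreover have "X powr (a + (a - b) * (q - 1)) = X powr a / X powr ((b - a) * (q - 1))"
    by (subst powr_diff[symmetric]) (simp add: algebra_simps)
  ultimately show ?thesis
    unfolding duality_bound_def C_def[symmetric] by simp
qed

lemma ennreal_mult_add:
  "0 \<le> a \<Longrightarrow> 0 \<le> b \<Longrightarrow> 0 \<le> c \<Longrightarrow> ennreal (a * b + c) = ennreal a * ennreal b + ennreal c"
  by (simp add: ennreal_plus ennreal_mult)

lemma nn_integral_young: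
  fixes \<rho> \<psi> :: "'a \<Rightarrow> real" and q lam :: real
  defines "q' \<equiv> q / (q - 1)"
  assumes [measurable]: "\<rho> \<in> borel_measurable M" "\<psi> \<in> borel_measurable M"
    and nonneg: "\<And>x. \<rho> x \<ge> 0" "\<And>x. \<psi> x \<ge> 0" and q: "q > 1" and lam: "lam > 0"
    and int: "integrable M (\<lambda>x. \<rho> x * \<psi> x)" "integrable M (\<lambda>x. \<psi> x powr q')"
  shows "ennreal (\<integral>x. \<rho> x * \<psi> x \<partial>M)
    \<le> ennreal (lam powr q / q) * (\<integral>\<^sup>+ x. ennreal (\<rho> x powr q) \<partial>M)
      + ennreal ((\<integral>x. \<psi> x powr q' \<partial>M) / (lam powr q' * q'))"
proof -
  have q': "q' > 1" "1 / q + 1 / q' = 1"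
    using q by (simp_all add: q'_def field_simps)
  have young: "\<rho> x * \<psi> x \<le> lam powr q / q * \<rho> x powr q + \<psi> x powr q' / (lam powr q' * q')" for x
  proof -
    have "\<rho> x * \<psi> x = (lam * \<rho> x) * (\<psi> x / lam)"
      using lam by simp
    also have "\<dots> \<le> (lam * \<rho> x) powr q / q + (\<psi> x / lam) powr q' / q'"
      using nonneg[of x] lam q q' by (intro Youngs_inequality) auto
    also have "\<dots> = lam powr q / q * \<rho> x powr q + \<psi> x powr q' / (lam powr q' * q')"
      using nonneg[of x] lam by (simp add: powr_mult powr_divide)
    finally show ?thesis .
  qed
  have "ennreal (\<integral>x. \<rho> x * \<psi> x \<partial>M) = (\<integral>\<^sup>+ x. ennreal (\<rho> x * \<psi> x) \<partial>M)"
    using int nonneg by (intro nn_integral_eq_integral[symmetric]) auto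
  also have "\<dots> \<le> (\<integral>\<^sup>+ x. ennreal (lam powr q / q) * ennreal (\<rho> x powr q)
                       + ennreal (\<psi> x powr q' / (lam powr q' * q')) \<partial>M)"
  proof (rule nn_integral_mono)
    fix x
    have "ennreal (\<rho> x * \<psi> x) \<le> ennreal (lam powr q / q * \<rho> x powr q + \<psi> x powr q' / (lam powr q' * q'))"
      using young[of x] by (rule ennreal_leI)
    also have "\<dots> = ennreal (lam powr q / q) * ennreal (\<rho> x powr q) + ennreal (\<psi> x powr q' / (lam powr q' * q'))"
      using q lam q' nonneg by (intro ennreal_mult_add) auto
    finally show "ennreal (\<rho> x * \<psi> x) \<le> ennreal (lam powr q / q) * ennreal (\<rho> x powr q)
        + ennreal (\<psi> x powr q' / (lam powr q' * q'))" .
  qed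
  also have "\<dots> = ennreal (lam powr q / q) * (\<integral>\<^sup>+ x. ennreal (\<rho> x powr q) \<partial>M)
      + (\<integral>\<^sup>+ x. ennreal (\<psi> x powr q' / (lam powr q' * q')) \<partial>M)"
    by (subst nn_integral_add) (auto simp: nn_integral_cmult)
  also have "(\<integral>\<^sup>+ x. ennreal (\<psi> x powr q' / (lam powr q' * q')) \<partial>M)
      = ennreal ((\<integral>x. \<psi> x powr q' \<partial>M) / (lam powr q' * q'))"
    using int q' lam by (subst nn_integral_eq_integral) auto
  finally show ?thesis .
qed

text \<open>With \<open>\<lambda>\<close> chosen so that the \<open>\<psi>\<close>-term of Young's inequality contributes \<open>A / 2\<close>;
  unlike Hoelder's inequality this needs no integrability of \<open>\<rho>\<^sup>q\<close>.\<close>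
lemma nn_integral_powr_ge_duality_bound:
  fixes \<rho> \<psi> :: "'a \<Rightarrow> real"
  assumes [measurable]: "\<rho> \<in> borel_measurable M" "\<psi> \<in> borel_measurable M"
    and nonneg: "\<And>x. \<rho> x \<ge> 0" "\<And>x. \<psi> x \<ge> 0" and q: "q > 1"
    and A: "A > 0" "A \<le> (\<integral>x. \<rho> x * \<psi> x \<partial>M)" "integrable M (\<lambda>x. \<rho> x * \<psi> x)"
    and \<Phi>: "\<Phi> = (\<integral>x. \<psi> x powr (q / (q - 1)) \<partial>M)" "\<Phi> > 0" "integrable M (\<lambda>x. \<psi> x powr (q / (q - 1)))"
  shows "ennreal (duality_bound q A \<Phi>) \<le> (\<integral>\<^sup>+ x. ennreal (\<rho> x powr q) \<partial>M)"
proof -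
  define q' where "q' = q / (q - 1)"
  have q': "q' > 1"
    using q by (simp add: q'_def field_simps)
  define lam where "lam = (2 * \<Phi> / (q' * A)) powr (1 / q')"
  have lam: "lam > 0"
    using \<Phi> A q' by (simp add: lam_def)
  have "lam powr q' = 2 * \<Phi> / (q' * A)"
    using \<Phi> A q' by (simp add: lam_def powr_powr)
  then have half: "\<Phi> / (lam powr q' * q') = A / 2"
    using \<Phi>(2) A q' lam by (simp add: field_simps)
  have lam_q: "lam powr q = (2 * \<Phi> / (q' * A)) powr (q - 1)"
    using q by (simp add: lam_def powr_powr q'_def)
  define I where "I = (\<integral>\<^sup>+ x. ennreal (\<rho> x powr q) \<partial>M)"
  have "ennreal A \<le> ennreal (\<integral>x. \<rho> x * \<psi> x \<partial>M)"
    using A by simp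
  also have "\<dots> \<le> ennreal (lam powr q / q) * I + ennreal (\<Phi> / (lam powr q' * q'))"
    using nn_integral_young[OF assms(1,2) nonneg q lam A(3) \<Phi>(3)]
    unfolding I_def q'_def \<Phi>(1) .
  finally have main: "ennreal A \<le> ennreal (lam powr q / q) * I + ennreal (A / 2)"
    unfolding half .
  show ?thesis
  proof (cases I)
    case (real Ir)
    then have "ennreal A \<le> ennreal (lam powr q / q * Ir + A / 2)"
      using main q A lam by (subst ennreal_mult_add) auto
    then have "A \<le> lam powr q / q * Ir + A / 2"
      using real q A lam by (subst (asm) ennreal_le_iff) auto
    then have "q * A / (2 * lam powr q) \<le> Ir"
      using q lam by (simp add: field_simps)
    then show ?thesis
      unfolding I_def[symmetric] real duality_bound_def lam_q[unfolded q'_def, symmetric] by (rule ennreal_leI)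
  qed (simp add: I_def)
qed

section \<open>Lower bound for the mixed norm of the cube densities\<close>

lemma ennreal_powr_le_enn_powr:
  assumes "ennreal b \<le> I" "0 \<le> b" "0 \<le> s"
  shows "ennreal (b powr s) \<le> enn_powr I s"
proof (cases I)
  case (real i)
  then have "b powr s \<le> i powr s"
    using assms by (intro powr_mono2) (auto simp: ennreal_le_iff)
  then show ?thesis
    using real by (simp add: enn_powr_def ennreal_leI)
qed (simp add: enn_powr_def)

lemma mixed_norm_ge:
  assumes p: "p > 0" and q: "q > 0" and B: "B \<ge> 0"
    and bound: "\<And>t. t \<in> {-pi..pi} \<Longrightarrow> ennreal B \<le> (\<integral>\<^sup>+ x. ennreal (\<bar>F t x\<bar> powr q) \<partial>lborel)"
  shows "ennreal ((2 * pi) powr (1 / p) * B powr (1 / q)) \<le> mixed_norm p q F"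
proof -
  have "ennreal (B powr (p / q) * (2 * pi))
      = (\<integral>\<^sup>+ t. ennreal (B powr (p / q)) * indicator {-pi..pi} t \<partial>lborel)"
    by (subst nn_integral_cmult_indicator) (auto simp: ennreal_mult)
  also have "\<dots> \<le> (\<integral>\<^sup>+ t. indicator {-pi..pi} t *
      enn_powr (\<integral>\<^sup>+ x. ennreal (\<bar>F t x\<bar> powr q) \<partial>lborel) (p / q) \<partial>lborel)"
    using bound B p q
    by (intro nn_integral_mono) (auto split: split_indicator intro: ennreal_powr_le_enn_powr)
  finally have "ennreal ((B powr (p / q) * (2 * pi)) powr (1 / p)) \<le> mixed_norm p q F"
    unfolding mixed_norm_def using p by (intro ennreal_powr_le_enn_powr) auto
  moreover have "(B powr (p / q) * (2 * pi)) powr (1 / p) = (2 * pi) powr (1 / p) * B powr (1 / q)"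
    using p B by (simp add: powr_mult powr_powr)
  ultimately show ?thesis
    by simp
qed

definition hermite_cube :: "nat \<Rightarrow> ('n::finite \<Rightarrow> nat) set" where
  "hermite_cube m = {\<alpha>. \<forall>i. \<alpha> i \<le> m}"

lemma hermite_cube_PiE: "hermite_cube m = PiE UNIV (\<lambda>_. {..m})"
  unfolding hermite_cube_def PiE_UNIV_domain by (auto simp: Pi_def)

lemma finite_hermite_cube: "finite (hermite_cube m)"
  unfolding hermite_cube_PiE by (intro finite_PiE) auto

lemma card_hermite_cube: "card (hermite_cube m :: ('n::finite \<Rightarrow> nat) set) = (m + 1) ^ CARD('n)"
  unfolding hermite_cube_PiE by (simp add: card_PiE)

lemma integral_cube_density_gauss_weight_ge:
  fixes t :: real and m :: nat
  defines "\<rho> \<equiv> \<lambda>x. \<Sum>\<alpha>\<in>(hermite_cube m :: ('n::finite \<Rightarrow> nat) set). (cmod (herm_prop t (hermite_nd \<alpha>) x))\<^sup>2"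
  assumes a: "a = 1 / (4 * real CARD('n) * (real m + 1))"
  shows "integrable lborel (\<lambda>x. \<rho> x * gauss_weight a x)"
    and "3/4 * (real m + 1) ^ CARD('n) \<le> (\<integral>x. \<rho> x * gauss_weight a x \<partial>lborel)"
proof -
  have int: "integrable lborel (\<lambda>x. (cmod (herm_prop t (hermite_nd \<alpha>) x))\<^sup>2 * gauss_weight a x)" for \<alpha>
    using a by (intro integrable_sq_mult_gauss_weight herm_prop_hermite_nd(1)) simp
  show "integrable lborel (\<lambda>x. \<rho> x * gauss_weight a x)"
    unfolding \<rho>_def sum_distrib_right by (intro Bochner_Integration.integrable_sum int)
  have "3/4 * (real m + 1) ^ CARD('n) = (\<Sum>\<alpha>\<in>(hermite_cube m :: ('n \<Rightarrow> nat) set). 3/4)"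
    by (simp add: card_hermite_cube add.commute)
  also have "\<dots> \<le> (\<Sum>\<alpha>\<in>(hermite_cube m :: ('n \<Rightarrow> nat) set). \<integral>x. (cmod (herm_prop t (hermite_nd \<alpha>) x))\<^sup>2 * gauss_weight a x \<partial>lborel)"
  proof (rule sum_mono)
    fix \<alpha> :: "'n \<Rightarrow> nat"
    assume "\<alpha> \<in> hermite_cube m"
    then show "3/4 \<le> (\<integral>x. (cmod (herm_prop t (hermite_nd \<alpha>) x))\<^sup>2 * gauss_weight a x \<partial>lborel)"
      by (intro integral_herm_prop_squared_gauss_weight_ge[OF _ a]) (simp add: hermite_cube_def)
  qed
  also have "\<dots> = (\<integral>x. \<rho> x * gauss_weight a x \<partial>lborel)"
    unfolding \<rho>_def sum_distrib_right by (intro Bochner_Integration.integral_sum[symmetric] int)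
  finally show "3/4 * (real m + 1) ^ CARD('n) \<le> (\<integral>x. \<rho> x * gauss_weight a x \<partial>lborel)" .
qed

lemma nn_integral_cube_density_powr_ge:
  fixes t q :: real and m :: nat
  defines "n \<equiv> real CARD('n::finite)"
  defines "\<rho> \<equiv> \<lambda>x. \<Sum>\<alpha>\<in>(hermite_cube m :: ('n \<Rightarrow> nat) set). (cmod (herm_prop t (hermite_nd \<alpha>) x))\<^sup>2"
  assumes q: "q > 1"
  shows "ennreal (duality_bound q (3/4 * (real m + 1) powr n)
            ((4 * n * pi / (q / (q - 1))) powr (n / 2) * (real m + 1) powr (n / 2)))
       \<le> (\<integral>\<^sup>+ x. ennreal (\<rho> x powr q) \<partial>lborel)"
proof -
  define q' where "q' = q / (q - 1)"
  have q': "q' > 0"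
    using q by (simp add: q'_def)
  define a where "a = 1 / (4 * n * (real m + 1))"
  have a: "a > 0"
    by (simp add: a_def n_def)
  have scale: "pi / (a * q') = 4 * n * pi / q' * (real m + 1)"
    by (simp add: a_def)
  have \<Phi>: "has_bochner_integral lborel (\<lambda>x::real^'n. gauss_weight a x powr q')
      ((4 * n * pi / q') powr (n / 2) * (real m + 1) powr (n / 2))"
    using has_bochner_integral_gauss_weight_powr[OF a q'] unfolding scale powr_mult n_def .
  show ?thesis
    unfolding q'_def[symmetric]
  proof (rule nn_integral_powr_ge_duality_bound)
    show "\<rho> \<in> borel_measurable lborel"
      unfolding \<rho>_def by measurable
    have "3/4 * (real m + 1) ^ CARD('n) \<le> (\<integral>x. \<rho> x * gauss_weight a x \<partial>lborel)"
      unfolding \<rho>_def a_def n_def by (rule integral_cube_density_gauss_weight_ge(2)) simp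
    then show "3/4 * (real m + 1) powr n \<le> (\<integral>x. \<rho> x * gauss_weight a x \<partial>lborel)"
      by (simp add: n_def powr_realpow)
    show "integrable lborel (\<lambda>x. \<rho> x * gauss_weight a x)"
      unfolding \<rho>_def a_def n_def by (rule integral_cube_density_gauss_weight_ge(1)) simp
    show "(4 * n * pi / q') powr (n / 2) * (real m + 1) powr (n / 2)
        = (\<integral>x. gauss_weight a (x::real^'n) powr (q / (q - 1)) \<partial>lborel)"
      using has_bochner_integral_integral_eq[OF \<Phi>, symmetric] unfolding q'_def .
    show "integrable lborel (\<lambda>x::real^'n. gauss_weight a x powr (q / (q - 1)))"
      using \<Phi> by (simp add: q'_def has_bochner_integral_iff)
  qed (use q q' a in \<open>simp_all add: \<rho>_def sum_nonneg gauss_weight_pos less_imp_le n_def\<close>)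
qed

lemma mixed_norm_cube_density_ge:
  fixes p q :: real and m :: nat
  defines "n \<equiv> real CARD('n::finite)"
  assumes p: "p > 0" and q: "q > 1"
  shows "ennreal ((2 * pi) powr (1 / p) * duality_bound q (3/4 * (real m + 1) powr n)
            ((4 * n * pi / (q / (q - 1))) powr (n / 2) * (real m + 1) powr (n / 2)) powr (1 / q))
    \<le> mixed_norm p q (\<lambda>t (x::real^'n). \<Sum>\<alpha>\<in>hermite_cube m. (cmod (herm_prop t (hermite_nd \<alpha>) x))\<^sup>2)"
proof (rule mixed_norm_ge)
  fix t :: real
  show "ennreal (duality_bound q (3/4 * (real m + 1) powr n)
          ((4 * n * pi / (q / (q - 1))) powr (n / 2) * (real m + 1) powr (n / 2)))
      \<le> (\<integral>\<^sup>+ x. ennreal (\<bar>\<Sum>\<alpha>\<in>(hermite_cube m :: ('n \<Rightarrow> nat) set).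
             (cmod (herm_prop t (hermite_nd \<alpha>) x))\<^sup>2\<bar> powr q) \<partial>lborel)"
    using nn_integral_cube_density_powr_ge[OF q, where 'n='n] unfolding n_def by (simp add: sum_nonneg)
qed (use p q in \<open>auto simp: n_def intro!: less_imp_le[OF duality_bound_pos]\<close>)

lemma cube_density_mixed_norm_ge:
  fixes p q :: real
  assumes p: "p > 0" and q: "q > 1"
  shows "\<exists>C>0. \<forall>m. ennreal (C * (real m + 1) powr (real CARD('n::finite) * (q + 1) / (2 * q)))
    \<le> mixed_norm p q (\<lambda>t (x::real^'n). \<Sum>\<alpha>\<in>hermite_cube m. (cmod (herm_prop t (hermite_nd \<alpha>) x))\<^sup>2)"
proof -
  define n where "n = real CARD('n)"
  define K where "K = (4 * n * pi / (q / (q - 1))) powr (n / 2)"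
  define D where "D = duality_bound q (3/4) K"
  have K: "K > 0"
    using q by (simp add: K_def n_def)
  have D: "D > 0"
    using q K by (simp add: D_def duality_bound_pos)
  define C where "C = (2 * pi) powr (1 / p) * D powr (1 / q)"
  have "(2 * pi) powr (1 / p) * duality_bound q (3/4 * (real m + 1) powr n) (K * (real m + 1) powr (n / 2)) powr (1 / q)
      = C * (real m + 1) powr (n * (q + 1) / (2 * q))" for m
  proof -
    have "duality_bound q (3/4 * (real m + 1) powr n) (K * (real m + 1) powr (n / 2))
        = D * (real m + 1) powr (n + (n - n / 2) * (q - 1))"
      unfolding D_def using q K by (intro duality_bound_scale) auto
    also have "n + (n - n / 2) * (q - 1) = n * (q + 1) / 2"
      by (simp add: field_simps)
    finally show ?thesis
      using q D by (simp add: C_def powr_mult powr_powr mult.assoc)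
  qed
  moreover have "C > 0"
    using D by (simp add: C_def)
  ultimately show ?thesis
    using mixed_norm_cube_density_ge[OF p q] unfolding n_def K_def by metis
qed

section \<open>Projections onto Hermite cubes\<close>

lemma infinite_UNIV_fun_nat: "infinite (UNIV :: ('n::finite \<Rightarrow> nat) set)"
proof
  assume "finite (UNIV :: ('n \<Rightarrow> nat) set)"
  then have "finite (range (\<lambda>k::nat. \<lambda>_::'n. k))"
    by (rule finite_subset[rotated]) auto
  moreover have "inj (\<lambda>k::nat. \<lambda>_::'n. k)"
    by (auto intro!: injI simp: fun_eq_iff)
  ultimately show False
    using finite_imageD by blast
qed

lemma L2_orthonormal_hermite_nd: "inj E \<Longrightarrow> L2_orthonormal (\<lambda>j. hermite_nd (E j))"
  unfolding L2_orthonormal_def by (auto simp: sq_integrable_hermite_nd L2_inner_hermite_nd inj_eq)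

lemma schatten_norm_indicator:
  assumes "finite S"
  shows "schatten_norm r (indicator S) = real (card S) powr (1 / r)"
proof -
  have "(\<Sum>j. \<bar>indicator S j :: real\<bar> powr r) = (\<Sum>j\<in>S. \<bar>indicator S j :: real\<bar> powr r)"
    using assms by (intro suminf_finite) auto
  then show ?thesis
    by (simp add: schatten_norm_def)
qed

lemma density_t_indicator_vimage:
  assumes E: "bij E" and T: "finite T"
  shows "density_t (indicator (E -` T)) (\<lambda>j. hermite_nd (E j)) t x
    = (\<Sum>\<alpha>\<in>T. (cmod (herm_prop t (hermite_nd \<alpha>) x))\<^sup>2)"
proof -
  have fin: "finite (E -` T)"
    using E T by (intro finite_vimageI) (auto simp: bij_is_inj)
  have "density_t (indicator (E -` T)) (\<lambda>j. hermite_nd (E j)) t x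
      = (\<Sum>j\<in>E -` T. (cmod (herm_prop t (hermite_nd (E j)) x))\<^sup>2)"
    unfolding density_t_def using fin by (subst suminf_finite) (auto simp: indicator_def)
  also have "\<dots> = (\<Sum>\<alpha>\<in>T. (cmod (herm_prop t (hermite_nd \<alpha>) x))\<^sup>2)"
    using E by (intro sum.reindex_bij_betw) (auto simp: bij_betw_def bij_is_surj inj_on_def surj_f_inv_f)
  finally show ?thesis .
qed

lemma exists_nat_powr_less:
  fixes M C \<beta> \<kappa> :: real
  assumes C: "C > 0" and \<beta>\<kappa>: "\<beta> < \<kappa>"
  shows "\<exists>m::nat. M * (real m + 1) powr \<beta> < C * (real m + 1) powr \<kappa>"
proof -
  obtain m :: nat where m: "max (M / C) 1 powr (1 / (\<kappa> - \<beta>)) < real m"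
    using reals_Archimedean2 by blast
  define X where "X = real m + 1"
  have X: "X > 0" "max (M / C) 1 powr (1 / (\<kappa> - \<beta>)) < X"
    using m by (simp_all add: X_def)
  then have "(max (M / C) 1 powr (1 / (\<kappa> - \<beta>))) powr (\<kappa> - \<beta>) < X powr (\<kappa> - \<beta>)"
    using \<beta>\<kappa> by (intro powr_less_mono2) auto
  then have "M / C < X powr (\<kappa> - \<beta>)"
    using \<beta>\<kappa> by (simp add: powr_powr)
  then have "M < C * X powr (\<kappa> - \<beta>)"
    using C by (simp add: pos_divide_less_eq mult.commute)
  then have "M * X powr \<beta> < C * X powr (\<kappa> - \<beta>) * X powr \<beta>"
    using X by (intro mult_strict_right_mono) auto
  also have "\<dots> = C * X powr \<kappa>"
    by (simp add: powr_add[symmetric])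
  finally show ?thesis
    unfolding X_def by blast
qed

lemma hermite_cube_initial_data:
  fixes r :: real and m :: nat
  shows "\<exists>(u :: nat \<Rightarrow> real^'n::finite \<Rightarrow> complex) (c :: nat \<Rightarrow> real).
     L2_orthonormal u \<and> summable (\<lambda>j. \<bar>c j\<bar> powr r) \<and> (\<exists>j. c j \<noteq> 0) \<and>
     (\<forall>t x. summable (\<lambda>j. c j * (cmod (herm_prop t (u j) x))\<^sup>2)) \<and>
     schatten_norm r c = (real m + 1) powr (real CARD('n) / r) \<and>
     density_t c u = (\<lambda>t x. \<Sum>\<alpha>\<in>hermite_cube m. (cmod (herm_prop t (hermite_nd \<alpha>) x))\<^sup>2)"
proof -
  define E where "E = from_nat_into (UNIV :: ('n \<Rightarrow> nat) set)"
  have E: "bij E"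
    unfolding E_def by (rule bij_betw_from_nat_into) (auto simp: infinite_UNIV_fun_nat)
  define S where "S = E -` hermite_cube m"
  have S: "finite S" "card S = (m + 1) ^ CARD('n)"
    unfolding S_def using E
    by (simp_all add: finite_hermite_cube finite_vimageI bij_is_inj bij_is_surj card_vimage_inj card_hermite_cube)
  have "E (inv E (\<lambda>_. 0)) \<in> hermite_cube m"
    using E by (simp add: bij_is_surj surj_f_inv_f hermite_cube_def)
  then have nonzero: "indicator S (inv E (\<lambda>_. 0)) \<noteq> (0::real)"
    by (simp add: S_def)
  have "schatten_norm r (indicator S) = (real m + 1) powr (real CARD('n) / r)"
    using S by (simp add: schatten_norm_indicator powr_realpow[symmetric] powr_powr add.commute)
  moreover have "density_t (indicator S) (\<lambda>j. hermite_nd (E j))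
      = (\<lambda>t x. \<Sum>\<alpha>\<in>hermite_cube m. (cmod (herm_prop t (hermite_nd \<alpha>) x))\<^sup>2)"
    unfolding S_def by (intro ext density_t_indicator_vimage[OF E finite_hermite_cube])
  moreover have "summable (\<lambda>j. \<bar>indicator S j :: real\<bar> powr r)"
    "\<forall>t x. summable (\<lambda>j. indicator S j * (cmod (herm_prop t (hermite_nd (E j)) x))\<^sup>2)"
    by (intro allI summable_finite[OF S(1)]; simp)+
  ultimately show ?thesis
    using L2_orthonormal_hermite_nd[OF bij_is_inj[OF E]] nonzero
    by (intro exI[of _ "\<lambda>j. hermite_nd (E j)"] exI[of _ "indicator S"] conjI exI[of _ "inv E (\<lambda>_. 0)"])
qed

text \<open>The scaling condition is only needed to exclude \<open>q = 1\<close>.\<close>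

theorem proposition5p1:
  fixes p q r :: real
  assumes "p \<ge> 1" and "q \<ge> 1"
    and "2 / p + real CARD('n::finite) / q = real CARD('n)"
    and "r > 2 * q / (q + 1)"
  shows "\<forall>M::real. \<exists>(u :: nat \<Rightarrow> real^'n \<Rightarrow> complex) (c :: nat \<Rightarrow> real).
           L2_orthonormal u \<and> summable (\<lambda>j. \<bar>c j\<bar> powr r) \<and> (\<exists>j. c j \<noteq> 0) \<and>
           (\<forall>t x. summable (\<lambda>j. c j * (cmod (herm_prop t (u j) x))^2)) \<and>
           ennreal (M * schatten_norm r c) < mixed_norm p q (density_t c u)"
proof
  fix M :: real
  have q: "q > 1"
    using assms(1-3) by (cases "q = 1") auto
  have "0 < 2 * q / (q + 1)"
    using q by simp
  then have "real CARD('n) / r < real CARD('n) / (2 * q / (q + 1))"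
    using assms(4) by (intro divide_strict_left_mono mult_pos_pos) auto
  then have exponent: "real CARD('n) / r < real CARD('n) * (q + 1) / (2 * q)"
    by simp
  obtain C where C: "C > 0" and bound: "\<And>m. ennreal (C * (real m + 1) powr (real CARD('n) * (q + 1) / (2 * q)))
      \<le> mixed_norm p q (\<lambda>t (x::real^'n). \<Sum>\<alpha>\<in>hermite_cube m. (cmod (herm_prop t (hermite_nd \<alpha>) x))\<^sup>2)"
    using cube_density_mixed_norm_ge[of p q] assms(1) q by auto
  obtain m where m: "M * (real m + 1) powr (real CARD('n) / r) < C * (real m + 1) powr (real CARD('n) * (q + 1) / (2 * q))"
    using exists_nat_powr_less[OF C exponent] by blast
  obtain u :: "nat \<Rightarrow> real^'n \<Rightarrow> complex" and c where data:
    "L2_orthonormal u \<and> summable (\<lambda>j. \<bar>c j\<bar> powr r) \<and> (\<exists>j. c j \<noteq> 0) \<and>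
     (\<forall>t x. summable (\<lambda>j. c j * (cmod (herm_prop t (u j) x))\<^sup>2))"
    and norm: "schatten_norm r c = (real m + 1) powr (real CARD('n) / r)"
    and density: "density_t c u = (\<lambda>t x. \<Sum>\<alpha>\<in>hermite_cube m. (cmod (herm_prop t (hermite_nd \<alpha>) x))\<^sup>2)"
    using hermite_cube_initial_data[of r m] by blast
  have "ennreal (M * schatten_norm r c) < ennreal (C * (real m + 1) powr (real CARD('n) * (q + 1) / (2 * q)))"
    unfolding norm using C m by (intro ennreal_lessI) auto
  also have "\<dots> \<le> mixed_norm p q (density_t c u)"
    unfolding density by (rule bound)
  finally show "\<exists>(u :: nat \<Rightarrow> real^'n \<Rightarrow> complex) (c :: nat \<Rightarrow> real).
           L2_orthonormal u \<and> summable (\<lambda>j. \<bar>c j\<bar> powr r) \<and> (\<exists>j. c j \<noteq> 0) \<and>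
           (\<forall>t x. summable (\<lambda>j. c j * (cmod (herm_prop t (u j) x))^2)) \<and>
           ennreal (M * schatten_norm r c) < mixed_norm p q (density_t c u)"
    using data by blast
qed

end
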